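(* Let $H$ be a complex Hilbert space, $A\in B(H)$ a nonzero positive semidefinite operator, and $T\in B_{A^{1/2}}(H)$. Let $T_b$ be the operator on $\mathbf{R}(A^{1/2})$ given by $T_b(A^{1/2}x)=A^{1/2}Tx$, $x\in H$. Then $$\|T_b\|_{\mathbf{R}(A^{1/2})}=\|(T^{\diamond})^{\diamond}\|=\|T^{\diamond}\|_A,$$ where $\|(T^\diamond)^\diamond\|$ is the usual operator norm on $H$.
   Context: $\|x\|_A=\langle Ax,x\rangle^{1/2}$. For $S\in B(H)$, $\|S\|_A=\sup\{\|Sx\|_A : x\in\overline{R(A)},\ \|x\|_A=1\}$. $B_{A^{1/2}}(H)=\{S\in B(H): R(S^*A^{1/2})\subset R(A^{1/2})\}$. For $S\in B_{A^{1/2}}(H)$, $S^{\diamond}$ is the unique operator in $B(H)$ with $S^*A^{1/2}=A^{1/2}S^{\diamond}$ and $R(S^{\diamond})\subset\overline{R(A^{1/2})}$; $S^\diamond\in B_{A^{1/2}}(H)$. $P$ is the orthogonal projection onto $\overline{R(A)}$, and $\mathbf{R}(A^{1/2})$ is the Hilbert space $R(A^{1/2})$ with inner product $(A^{1/2}x,A^{1/2}y)=\langle Px,Py\rangle$. *)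

theory Defs
  imports "HOL-Analysis.Analysis"
begin

class complex_vector = real_vector +
  fixes scaleC :: "complex \<Rightarrow> 'a \<Rightarrow> 'a"
  assumes scaleC_add_right: "scaleC a (x + y) = scaleC a x + scaleC a y"
    and scaleC_add_left: "scaleC (a + b) x = scaleC a x + scaleC b x"
    and scaleC_scaleC: "scaleC a (scaleC b x) = scaleC (a * b) x"
    and scaleC_one: "scaleC 1 x = x"
    and scaleR_scaleC: "scaleR r x = scaleC (complex_of_real r) x"

class chilbert_space = complex_vector + banach +
  fixes cinner :: "'a \<Rightarrow> 'a \<Rightarrow> complex"
  assumes cinner_cnj: "cinner x y = cnj (cinner y x)"
    and cinner_add_left: "cinner (x + y) z = cinner x z + cinner y z"
    and cinner_scaleC_left: "cinner (scaleC c x) y = c * cinner x y"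
    and cinner_self_norm: "cinner x x = complex_of_real ((norm x)\<^sup>2)"

text \<open>Non-vacuity: the complex numbers form a complex Hilbert space.\<close>
instantiation complex :: complex_vector
begin
definition scaleC_complex :: "complex \<Rightarrow> complex \<Rightarrow> complex" where
  "scaleC_complex a x = a * x"
instance proof
  fix a b x y :: complex and r :: real
  show "scaleC a (x + y) = scaleC a x + scaleC a y" by (simp add: scaleC_complex_def distrib_left)
  show "scaleC (a + b) x = scaleC a x + scaleC b x" by (simp add: scaleC_complex_def distrib_right)
  show "scaleC a (scaleC b x) = scaleC (a * b) x" by (simp add: scaleC_complex_def mult.assoc)
  show "scaleC 1 x = x" by (simp add: scaleC_complex_def)
  show "scaleR r x = scaleC (complex_of_real r) x" by (simp add: scaleC_complex_def scaleR_conv_of_real)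
qed
end
instantiation complex :: chilbert_space
begin
definition cinner_complex :: "complex \<Rightarrow> complex \<Rightarrow> complex" where
  "cinner_complex x y = x * cnj y"
instance proof
  fix c x y z :: complex
  show "cinner x y = cnj (cinner y x)" by (simp add: cinner_complex_def mult.commute)
  show "cinner (x + y) z = cinner x z + cinner y z" by (simp add: cinner_complex_def distrib_right)
  show "cinner (scaleC c x) y = c * cinner x y" by (simp add: cinner_complex_def scaleC_complex_def mult.assoc)
  show "cinner x x = complex_of_real ((norm x)\<^sup>2)" by (simp only: cinner_complex_def complex_norm_square)
qed
end

definition cblinear :: "('a::chilbert_space \<Rightarrow> 'a) \<Rightarrow> bool" where
  "cblinear f \<longleftrightarrow> bounded_linear f \<and> (\<forall>c x. f (scaleC c x) = scaleC c (f x))"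

definition positive_op :: "('a::chilbert_space \<Rightarrow> 'a) \<Rightarrow> bool" where
  "positive_op A \<longleftrightarrow> cblinear A \<and> (\<forall>x. Im (cinner (A x) x) = 0 \<and> Re (cinner (A x) x) \<ge> 0)"

definition adjoint :: "('a::chilbert_space \<Rightarrow> 'a) \<Rightarrow> ('a \<Rightarrow> 'a)" where
  "adjoint S = (THE S'. cblinear S' \<and> (\<forall>x y. cinner (S x) y = cinner x (S' y)))"

definition op_sqrt :: "('a::chilbert_space \<Rightarrow> 'a) \<Rightarrow> ('a \<Rightarrow> 'a)" where
  "op_sqrt A = (THE B. positive_op B \<and> B \<circ> B = A)"

definition orth_proj :: "'a::chilbert_space set \<Rightarrow> 'a \<Rightarrow> 'a" where
  "orth_proj M x = (THE p. p \<in> M \<and> (\<forall>z\<in>M. cinner (x - p) z = 0))"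

definition projP :: "('a::chilbert_space \<Rightarrow> 'a) \<Rightarrow> 'a \<Rightarrow> 'a" where
  "projP A = orth_proj (closure (range A))"

definition A_norm :: "('a::chilbert_space \<Rightarrow> 'a) \<Rightarrow> 'a \<Rightarrow> real" where
  "A_norm A x = sqrt (Re (cinner (A x) x))"

definition A_opnorm :: "('a::chilbert_space \<Rightarrow> 'a) \<Rightarrow> ('a \<Rightarrow> 'a) \<Rightarrow> real" where
  "A_opnorm A S = (SUP x \<in> {x \<in> closure (range A). A_norm A x = 1}. A_norm A (S x))"

definition BA_half :: "('a::chilbert_space \<Rightarrow> 'a) \<Rightarrow> ('a \<Rightarrow> 'a) set" where
  "BA_half A = {S. cblinear S \<and> range (adjoint S \<circ> op_sqrt A) \<subseteq> range (op_sqrt A)}"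

definition diamond :: "('a::chilbert_space \<Rightarrow> 'a) \<Rightarrow> ('a \<Rightarrow> 'a) \<Rightarrow> ('a \<Rightarrow> 'a)" where
  "diamond A S = (THE D. cblinear D \<and> adjoint S \<circ> op_sqrt A = op_sqrt A \<circ> D
                         \<and> range D \<subseteq> closure (range (op_sqrt A)))"

text \<open>Norm of y = A^{1/2}x in bold R(A^{1/2}) is \<parallel>Px\<parallel> (from (A^{1/2}x, A^{1/2}y) = \<langle>Px,Py\<rangle>).\<close>
definition RA_norm :: "('a::chilbert_space \<Rightarrow> 'a) \<Rightarrow> 'a \<Rightarrow> real" where
  "RA_norm A y = norm (projP A (SOME x. op_sqrt A x = y))"

definition T_b :: "('a::chilbert_space \<Rightarrow> 'a) \<Rightarrow> ('a \<Rightarrow> 'a) \<Rightarrow> 'a \<Rightarrow> 'a" where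
  "T_b A T y = op_sqrt A (T (SOME x. op_sqrt A x = y))"

definition RA_opnorm_set :: "('a::chilbert_space \<Rightarrow> 'a) \<Rightarrow> ('a \<Rightarrow> 'a) \<Rightarrow> real set" where
  "RA_opnorm_set A U = (\<lambda>y. RA_norm A (U y)) ` {y \<in> range (op_sqrt A). RA_norm A y = 1}"

definition RA_opnorm :: "('a::chilbert_space \<Rightarrow> 'a) \<Rightarrow> ('a \<Rightarrow> 'a) \<Rightarrow> real" where
  "RA_opnorm A U = Sup (RA_opnorm_set A U)"

end

theory Submission
  imports Defs
begin

text \<open>Write \<open>R = A\<^sup>1\<^sup>/\<^sup>2\<close>, \<open>M\<close> for the closure of the range of \<open>A\<close> (which is also the closure
  of the range of \<open>R\<close>) and \<open>P\<close> for the projection onto \<open>M\<close>. Then \<open>R x \<mapsto> P x\<close> is an isometry of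
  \<open>\<^bold>R(A\<^sup>1\<^sup>/\<^sup>2)\<close> onto \<open>M\<close> which turns \<open>T\<^sub>b\<close> into the compression \<open>P T P\<close>, and \<open>P T P\<close> is
  exactly \<open>(T\<^sup>\<diamond>)\<^sup>\<diamond>\<close>; this gives the first equality. For the second, \<open>T\<^sup>\<diamond>\<close> and \<open>(T\<^sup>\<diamond>)\<^sup>\<diamond>\<close>
  are \<open>A\<close>-adjoint to each other, \<open>\<langle>R T\<^sup>\<diamond> x, w\<rangle> = \<langle>R x, (T\<^sup>\<diamond>)\<^sup>\<diamond> w\<rangle>\<close>, so Cauchy--Schwarz gives
  \<open>\<parallel>T\<^sup>\<diamond>\<parallel>\<^sub>A \<le> \<parallel>(T\<^sup>\<diamond>)\<^sup>\<diamond>\<parallel>\<close>, and the converse follows by testing \<open>(T\<^sup>\<diamond>)\<^sup>\<diamond> w \<in> M\<close> against the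
  dense subspace \<open>R(A\<^sup>1\<^sup>/\<^sup>2)\<close>. That \<open>T\<^sup>\<diamond>\<close> exists as a bounded operator is Douglas' lemma, proved
  with Baire's theorem; the square root itself is built from the binomial series.\<close>

section \<open>Algebra of the complex inner product\<close>

lemma scaleC_zero_right [simp]: "scaleC c (0::'a::chilbert_space) = 0"
  using scaleC_add_right[of c 0 0] by simp

lemma scaleC_minus_right: "scaleC c (- x::'a::chilbert_space) = - scaleC c x"
  using scaleC_add_right[of c x "- x"] by (simp add: minus_unique)

lemma scaleC_diff_right: "scaleC c (x - y::'a::chilbert_space) = scaleC c x - scaleC c y"
  by (simp only: diff_conv_add_uminus scaleC_add_right scaleC_minus_right)

lemma scaleC_scaleR_commute: "scaleC c (scaleR r x) = scaleR r (scaleC c (x::'a::chilbert_space))"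
  by (simp add: scaleR_scaleC scaleC_scaleC mult.commute)

lemma cinner_zero_left [simp]: "cinner 0 (y::'a::chilbert_space) = 0"
  using cinner_add_left[of 0 0 y] by simp

lemma cinner_zero_right [simp]: "cinner (x::'a::chilbert_space) 0 = 0"
  by (subst cinner_cnj) simp

lemma cinner_add_right: "cinner (x::'a::chilbert_space) (y + z) = cinner x y + cinner x z"
  by (subst (1 2 3) cinner_cnj) (simp add: cinner_add_left)

lemma cinner_scaleC_right: "cinner (x::'a::chilbert_space) (scaleC c y) = cnj c * cinner x y"
  by (subst (1 2) cinner_cnj) (simp add: cinner_scaleC_left)

lemma cinner_minus_left: "cinner (- x::'a::chilbert_space) y = - cinner x y"
  using cinner_add_left[of x "- x" y] by (simp add: minus_unique)

lemma cinner_minus_right: "cinner (x::'a::chilbert_space) (- y) = - cinner x y"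
  by (subst (1 2) cinner_cnj) (simp add: cinner_minus_left)

lemma cinner_diff_left: "cinner (x - y::'a::chilbert_space) z = cinner x z - cinner y z"
  by (simp only: diff_conv_add_uminus cinner_add_left cinner_minus_left)

lemma cinner_diff_right: "cinner (x::'a::chilbert_space) (y - z) = cinner x y - cinner x z"
  by (simp only: diff_conv_add_uminus cinner_add_right cinner_minus_right)

lemma cinner_scaleR_left: "cinner (scaleR r x::'a::chilbert_space) y = of_real r * cinner x y"
  by (simp add: scaleR_scaleC cinner_scaleC_left)

lemma cinner_scaleR_right: "cinner (x::'a::chilbert_space) (scaleR r y) = of_real r * cinner x y"
  by (simp add: scaleR_scaleC cinner_scaleC_right)

lemmas cinner_simps = cinner_add_left cinner_add_right cinner_diff_left cinner_diff_right
  cinner_minus_left cinner_minus_right cinner_scaleC_left cinner_scaleC_right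
  cinner_scaleR_left cinner_scaleR_right

lemma Re_cinner_self: "Re (cinner (x::'a::chilbert_space) x) = (norm x)\<^sup>2"
  by (simp add: cinner_self_norm)

lemma cmod_cinner_self: "cmod (cinner (x::'a::chilbert_space) x) = (norm x)\<^sup>2"
  by (simp only: cinner_self_norm norm_of_real) simp

lemma cinner_eq_zero_iff: "cinner (x::'a::chilbert_space) x = 0 \<longleftrightarrow> x = 0"
  by (simp add: cinner_self_norm)

lemma cinner_ext_left: "(\<And>y. cinner (x::'a::chilbert_space) y = cinner z y) \<Longrightarrow> x = z"
  using cinner_eq_zero_iff[of "x - z"] by (simp add: cinner_diff_left)

lemma cinner_ext_right: "(\<And>y. cinner y (x::'a::chilbert_space) = cinner y z) \<Longrightarrow> x = z"
  using cinner_eq_zero_iff[of "x - z"] by (simp add: cinner_diff_right)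

lemma Re_cinner_commute: "Re (cinner y (x::'a::chilbert_space)) = Re (cinner x y)"
  by (subst cinner_cnj) simp

lemma power2_norm_add:
  "(norm (x + y::'a::chilbert_space))\<^sup>2 = (norm x)\<^sup>2 + 2 * Re (cinner x y) + (norm y)\<^sup>2"
  by (simp add: Re_cinner_self[symmetric] cinner_add_left cinner_add_right Re_cinner_commute[of y x])

lemma power2_norm_diff:
  "(norm (x - y::'a::chilbert_space))\<^sup>2 = (norm x)\<^sup>2 - 2 * Re (cinner x y) + (norm y)\<^sup>2"
  using power2_norm_add[of x "- y"] by (simp add: cinner_minus_right)

lemma parallelogram_law:
  "(norm (u + v::'a::chilbert_space))\<^sup>2 + (norm (u - v))\<^sup>2 = 2 * (norm u)\<^sup>2 + 2 * (norm v)\<^sup>2"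
  by (simp add: power2_norm_add power2_norm_diff)

lemma norm_scaleC: "norm (scaleC c (x::'a::chilbert_space)) = cmod c * norm x"
proof -
  have "complex_of_real ((norm (scaleC c x))\<^sup>2) = cinner (scaleC c x) (scaleC c x)"
    by (simp only: cinner_self_norm)
  also have "\<dots> = (c * cnj c) * cinner x x"
    by (simp add: cinner_scaleC_left cinner_scaleC_right)
  also have "\<dots> = complex_of_real ((cmod c * norm x)\<^sup>2)"
    by (simp only: cinner_self_norm complex_norm_square of_real_mult power_mult_distrib)
  finally show ?thesis
    by (simp only: of_real_eq_iff power2_eq_iff_nonneg norm_ge_zero zero_le_mult_iff) simp
qed

lemma power2_norm_diff_component:
  fixes x y :: "'a::chilbert_space"
  assumes "y \<noteq> 0"
  shows "(norm (x - scaleC (cinner x y / complex_of_real ((norm y)\<^sup>2)) y))\<^sup>2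
    = (norm x)\<^sup>2 - (cmod (cinner x y))\<^sup>2 / (norm y)\<^sup>2"
proof -
  define a where "a = cinner x y"
  define n where "n = (norm y)\<^sup>2"
  have n: "n > 0" using assms by (simp add: n_def)
  define t where "t = a / complex_of_real n"
  have "complex_of_real ((norm (x - scaleC t y))\<^sup>2) = cinner (x - scaleC t y) (x - scaleC t y)"
    by (simp only: cinner_self_norm)
  also have "\<dots> = cinner x x - cnj t * a - t * cinner y x + t * cnj t * cinner y y"
    by (simp add: cinner_simps a_def algebra_simps)
  also have "\<dots> = complex_of_real ((norm x)\<^sup>2 - (cmod a)\<^sup>2 / n)"
    using n by (simp add: a_def n_def t_def cinner_cnj[of y x] cinner_self_norm field_simps
        complex_mult_cnj[symmetric]) (metis complex_norm_square of_real_power)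
  finally show ?thesis
    by (simp only: of_real_eq_iff a_def n_def t_def)
qed

lemma norm_cinner_le: "cmod (cinner (x::'a::chilbert_space) y) \<le> norm x * norm y"
proof (cases "y = 0")
  case False
  then have "(cmod (cinner x y))\<^sup>2 / (norm y)\<^sup>2 \<le> (norm x)\<^sup>2"
    using power2_norm_diff_component[OF False, of x] by (metis diff_ge_0_iff_ge zero_le_power2)
  then have "(cmod (cinner x y))\<^sup>2 \<le> (norm x * norm y)\<^sup>2"
    using False by (simp add: field_simps power_mult_distrib)
  then show ?thesis
    by (meson mult_nonneg_nonneg norm_ge_zero power2_le_imp_le)
qed simp

lemma bounded_bilinear_cinner: "bounded_bilinear (cinner :: 'a::chilbert_space \<Rightarrow> 'a \<Rightarrow> complex)"
  by standard (auto simp: cinner_add_left cinner_add_right cinner_scaleR_left cinner_scaleR_right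
      scaleR_conv_of_real intro!: exI[of _ 1] norm_cinner_le)

lemmas continuous_on_cinner [continuous_intros] = bounded_bilinear.continuous_on[OF bounded_bilinear_cinner]

lemma bounded_linear_cinner_left: "bounded_linear (\<lambda>x::'a::chilbert_space. cinner x y)"
  by (rule bounded_bilinear.bounded_linear_left[OF bounded_bilinear_cinner])

lemma bounded_linear_scaleC: "bounded_linear (scaleC c :: 'a::chilbert_space \<Rightarrow> 'a)"
  by (rule bounded_linear_intro[where K="cmod c"])
    (auto simp: scaleC_add_right norm_scaleC scaleC_scaleR_commute mult.commute)

lemma norm_le_if_cinner_le_on_closure:
  fixes v :: "'a::chilbert_space"
  assumes "v \<in> closure S" "c \<ge> 0" "\<And>u. u \<in> S \<Longrightarrow> cmod (cinner u v) \<le> c * norm u"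
  shows "norm v \<le> c"
proof -
  have "closure S \<subseteq> {u. cmod (cinner u v) \<le> c * norm u}"
    using assms(3) by (intro closure_minimal closed_Collect_le continuous_intros) auto
  then have "cmod (cinner v v) \<le> c * norm v"
    using assms(1) by blast
  then show ?thesis
    using assms(2) by (cases "v = 0") (auto simp: cmod_cinner_self power2_eq_square)
qed


section \<open>Closed subspaces and orthogonal projections\<close>

definition csubspace :: "'a::chilbert_space set \<Rightarrow> bool" where
  "csubspace M \<longleftrightarrow> 0 \<in> M \<and> (\<forall>x\<in>M. \<forall>y\<in>M. x + y \<in> M) \<and> (\<forall>c. \<forall>x\<in>M. scaleC c x \<in> M)"

lemma csubspace_0: "csubspace M \<Longrightarrow> 0 \<in> M"
  by (simp add: csubspace_def)

lemma csubspace_add: "csubspace M \<Longrightarrow> x \<in> M \<Longrightarrow> y \<in> M \<Longrightarrow> x + y \<in> M"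
  by (simp add: csubspace_def)

lemma csubspace_scaleC: "csubspace M \<Longrightarrow> x \<in> M \<Longrightarrow> scaleC c x \<in> M"
  by (simp add: csubspace_def)

lemma csubspace_scaleR: "csubspace M \<Longrightarrow> x \<in> M \<Longrightarrow> scaleR r x \<in> M"
  by (simp add: csubspace_def scaleR_scaleC)

lemma csubspace_diff: "csubspace M \<Longrightarrow> x \<in> M \<Longrightarrow> y \<in> M \<Longrightarrow> x - y \<in> M"
  using csubspace_add[of M x "- y"] csubspace_scaleR[of M y "-1"] by simp

lemma csubspace_closure:
  assumes "csubspace (S::'a::chilbert_space set)"
  shows "csubspace (closure S)"
  unfolding csubspace_def
proof (intro conjI ballI allI)
  show "0 \<in> closure S" using assms csubspace_0 closure_subset by blast
next
  fix x y assume "x \<in> closure S" "y \<in> closure S"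
  then obtain u v where u: "\<And>n. u n \<in> S" "u \<longlonglongrightarrow> x" and v: "\<And>n. v n \<in> S" "v \<longlonglongrightarrow> y"
    by (meson closure_sequential)
  have "(\<lambda>n. u n + v n) \<longlonglongrightarrow> x + y" using u v by (intro tendsto_intros)
  moreover have "u n + v n \<in> S" for n using u v assms csubspace_add by blast
  ultimately show "x + y \<in> closure S" by (meson closure_sequential)
next
  fix c x assume "x \<in> closure S"
  then obtain u where u: "\<And>n. u n \<in> S" "u \<longlonglongrightarrow> x"
    by (meson closure_sequential)
  have "(\<lambda>n. scaleC c (u n)) \<longlonglongrightarrow> scaleC c x"
    using u bounded_linear.tendsto[OF bounded_linear_scaleC] by blast
  moreover have "scaleC c (u n) \<in> S" for n using u assms csubspace_scaleC by blast
  ultimately show "scaleC c x \<in> closure S" by (meson closure_sequential)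
qed

text \<open>The midpoint of two members of a minimising sequence lies in \<open>M\<close> again, so the parallelogram
  law bounds their distance.\<close>

lemma minimising_sequence_Cauchy:
  fixes M :: "'a::chilbert_space set"
  assumes M: "csubspace M" and m: "\<And>n. m n \<in> M"
    and d_le: "\<And>y. y \<in> M \<Longrightarrow> d \<le> norm (x - y)" and lim: "(\<lambda>n. norm (x - m n)) \<longlonglongrightarrow> d"
  shows "Cauchy m"
proof (rule metric_CauchyI)
  have d0: "0 \<le> d" by (rule LIMSEQ_le_const[OF lim]) simp
  define b where "b n = (norm (x - m n))\<^sup>2 - d\<^sup>2" for n
  have b_lim: "b \<longlonglongrightarrow> 0"
    using tendsto_diff[OF tendsto_power[OF lim, of 2] tendsto_const[of "d\<^sup>2"]]
    by (simp add: b_def[abs_def])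
  have b_bound: "(norm (m n - m k))\<^sup>2 \<le> 2 * b n + 2 * b k" for n k
  proof -
    have "scaleR (1/2) (m n + m k) \<in> M"
      using M m csubspace_add csubspace_scaleR by blast
    then have "d \<le> norm (x - scaleR (1/2) (m n + m k))" by (rule d_le)
    also have "\<dots> = norm ((x - m n) + (x - m k)) / 2"
    proof -
      have "(x - m n) + (x - m k) = scaleR 2 (x - scaleR (1/2) (m n + m k))"
        by (simp add: algebra_simps scaleR_2)
      then show ?thesis by simp
    qed
    finally have "(2 * d)\<^sup>2 \<le> (norm ((x - m n) + (x - m k)))\<^sup>2"
      using d0 by (intro power_mono) auto
    then show ?thesis
      using parallelogram_law[of "x - m n" "x - m k"]
      by (simp add: b_def power_mult_distrib norm_minus_commute)
  qed
  fix e :: real assume e: "e > 0"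
  then obtain N where N: "\<And>n. n \<ge> N \<Longrightarrow> b n < e\<^sup>2 / 4"
    using order_tendstoD(2)[OF b_lim, of "e\<^sup>2 / 4"] by (auto simp: eventually_sequentially)
  have "dist (m n) (m k) < e" if "n \<ge> N" "k \<ge> N" for n k
  proof -
    have "(norm (m n - m k))\<^sup>2 < e\<^sup>2"
      using b_bound[of n k] N[OF that(1)] N[OF that(2)] by linarith
    then show ?thesis
      using e by (simp add: dist_norm power_less_imp_less_base)
  qed
  then show "\<exists>N. \<forall>n\<ge>N. \<forall>k\<ge>N. dist (m n) (m k) < e" by blast
qed

lemma ex_nearest_point:
  fixes M :: "'a::chilbert_space set"
  assumes "closed M" "csubspace M"
  obtains p where "p \<in> M" "\<And>m. m \<in> M \<Longrightarrow> norm (x - p) \<le> norm (x - m)"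
proof -
  define d where "d = Inf ((\<lambda>m. norm (x - m)) ` M)"
  have ne: "M \<noteq> {}" using assms(2) csubspace_0 by blast
  have d_le: "d \<le> norm (x - m)" if "m \<in> M" for m
    unfolding d_def using that by (intro cInf_lower bdd_belowI[of _ 0]) auto
  have "\<exists>m\<in>M. norm (x - m) < d + 1 / real (Suc n)" for n
  proof -
    have "d < d + 1 / real (Suc n)" by simp
    then show ?thesis unfolding d_def using ne
      by (subst (asm) cInf_less_iff) (auto intro: bdd_belowI[of _ 0])
  qed
  then obtain m where m: "\<And>n. m n \<in> M" "\<And>n. norm (x - m n) < d + 1 / real (Suc n)"
    by metis
  have lim: "(\<lambda>n. norm (x - m n)) \<longlonglongrightarrow> d"
  proof (rule tendsto_sandwich[of "\<lambda>n. d" _ _ "\<lambda>n. d + 1 / real (Suc n)"])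
    show "(\<lambda>n. d + 1 / real (Suc n)) \<longlonglongrightarrow> d"
      using tendsto_add[OF tendsto_const[of d] LIMSEQ_inverse_real_of_nat]
      by (simp add: inverse_eq_divide)
    show "\<forall>\<^sub>F n in sequentially. d \<le> norm (x - m n)" using d_le m by auto
    show "\<forall>\<^sub>F n in sequentially. norm (x - m n) \<le> d + 1 / real (Suc n)"
      by (intro always_eventually allI less_imp_le m(2))
  qed simp
  obtain p where p: "m \<longlonglongrightarrow> p"
    using minimising_sequence_Cauchy[OF assms(2) m(1) d_le lim]
    by (auto simp: Cauchy_convergent_iff convergent_def)
  have "(\<lambda>n. norm (x - m n)) \<longlonglongrightarrow> norm (x - p)" by (intro tendsto_intros p)
  then have "norm (x - p) = d" using lim LIMSEQ_unique by blast
  then show ?thesis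
    using that closed_sequentially[OF assms(1) m(1) p] d_le by auto
qed

lemma ex_orthogonal_decomposition:
  fixes M :: "'a::chilbert_space set"
  assumes "closed M" "csubspace M"
  shows "\<exists>p\<in>M. \<forall>z\<in>M. cinner (x - p) z = 0"
proof -
  obtain p where p: "p \<in> M" "\<And>m. m \<in> M \<Longrightarrow> norm (x - p) \<le> norm (x - m)"
    using ex_nearest_point[OF assms] by blast
  have "cinner (x - p) z = 0" if z: "z \<in> M" for z
  proof (rule ccontr)
    assume nz: "cinner (x - p) z \<noteq> 0"
    then have "z \<noteq> 0" by auto
    define t where "t = cinner (x - p) z / complex_of_real ((norm z)\<^sup>2)"
    have "p + scaleC t z \<in> M" using assms(2) p(1) z csubspace_add csubspace_scaleC by blast
    then have "norm (x - p) \<le> norm (x - p - scaleC t z)"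
      using p(2) by (simp add: algebra_simps)
    then have "(norm (x - p))\<^sup>2 \<le> (norm (x - p - scaleC t z))\<^sup>2"
      by (simp add: power_mono)
    then have "(norm (x - p))\<^sup>2 \<le> (norm (x - p))\<^sup>2 - (cmod (cinner (x - p) z))\<^sup>2 / (norm z)\<^sup>2"
      unfolding t_def power2_norm_diff_component[OF \<open>z \<noteq> 0\<close>] .
    moreover have "(cmod (cinner (x - p) z))\<^sup>2 / (norm z)\<^sup>2 > 0"
      using nz \<open>z \<noteq> 0\<close> by simp
    ultimately show False by linarith
  qed
  with p(1) show ?thesis by blast
qed

locale closed_csubspace =
  fixes M :: "'a::chilbert_space set"
  assumes closed: "closed M" and csubspace: "csubspace M"
begin

lemma ex1_orth_proj: "\<exists>!p. p \<in> M \<and> (\<forall>z\<in>M. cinner (x - p) z = 0)"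
proof (rule ex_ex1I)
  fix p q assume p: "p \<in> M \<and> (\<forall>z\<in>M. cinner (x - p) z = 0)"
    and q: "q \<in> M \<and> (\<forall>z\<in>M. cinner (x - q) z = 0)"
  then have "cinner (x - q) (p - q) - cinner (x - p) (p - q) = 0"
    using csubspace_diff[OF csubspace] by simp
  then have "cinner (p - q) (p - q) = 0"
    by (simp add: cinner_diff_left algebra_simps)
  then show "p = q"
    by (simp add: cinner_eq_zero_iff)
qed (use ex_orthogonal_decomposition[OF closed csubspace] in blast)

lemma orth_proj_in: "orth_proj M x \<in> M"
  using theI'[OF ex1_orth_proj[of x]] unfolding orth_proj_def by blast

lemma orth_proj_orthogonal: "z \<in> M \<Longrightarrow> cinner (x - orth_proj M x) z = 0"
  using theI'[OF ex1_orth_proj[of x]] unfolding orth_proj_def by blast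

lemma orth_proj_unique: "p \<in> M \<Longrightarrow> (\<And>z. z \<in> M \<Longrightarrow> cinner (x - p) z = 0) \<Longrightarrow> orth_proj M x = p"
  unfolding orth_proj_def using ex1_orth_proj[of x] by (intro the1_equality) auto

lemma orth_proj_id: "m \<in> M \<Longrightarrow> orth_proj M m = m"
  by (rule orth_proj_unique) auto

lemma orth_proj_idem: "orth_proj M (orth_proj M x) = orth_proj M x"
  by (rule orth_proj_id[OF orth_proj_in])

lemma orth_proj_add: "orth_proj M (x + y) = orth_proj M x + orth_proj M y"
  using orth_proj_orthogonal[of _ x] orth_proj_orthogonal[of _ y]
  by (intro orth_proj_unique csubspace_add[OF csubspace] orth_proj_in)
    (simp add: cinner_add_left cinner_diff_left algebra_simps)

lemma orth_proj_scaleC: "orth_proj M (scaleC c x) = scaleC c (orth_proj M x)"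
  using orth_proj_orthogonal[of _ x]
  by (intro orth_proj_unique csubspace_scaleC[OF csubspace] orth_proj_in)
    (simp add: cinner_scaleC_left cinner_diff_left algebra_simps)

lemma cinner_orth_proj_complement: "cinner (orth_proj M x) (y - orth_proj M y) = 0"
  using orth_proj_orthogonal[OF orth_proj_in, of y x] by (subst cinner_cnj) simp

lemma norm_orth_proj_le: "norm (orth_proj M x) \<le> norm x"
proof (rule power2_le_imp_le)
  show "(norm (orth_proj M x))\<^sup>2 \<le> (norm x)\<^sup>2"
    using power2_norm_add[of "orth_proj M x" "x - orth_proj M x"] cinner_orth_proj_complement[of x x]
    by simp
qed simp

lemma cblinear_orth_proj: "cblinear (orth_proj M)"
  unfolding cblinear_def
  by (auto intro!: bounded_linear_intro[where K=1]
      simp: orth_proj_add orth_proj_scaleC scaleR_scaleC norm_orth_proj_le)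

lemma orth_proj_self_adjoint: "cinner (orth_proj M x) y = cinner x (orth_proj M y)"
  using cinner_orth_proj_complement[of x y] orth_proj_orthogonal[OF orth_proj_in[of y], of x]
  by (simp add: cinner_diff_left cinner_diff_right)

end

section \<open>Bounded operators and their adjoints\<close>

lemma cblinear_add: "cblinear S \<Longrightarrow> S (x + y) = S x + S y"
  unfolding cblinear_def by (simp add: bounded_linear.axioms(1) linear_add)

lemma cblinear_scaleC: "cblinear S \<Longrightarrow> S (scaleC c x) = scaleC c (S x)"
  unfolding cblinear_def by simp

lemma cblinear_bounded_linear: "cblinear S \<Longrightarrow> bounded_linear S"
  unfolding cblinear_def by simp

lemma cblinear_diff: "cblinear S \<Longrightarrow> S (x - y) = S x - S y"
  unfolding cblinear_def by (simp add: linear_diff bounded_linear.linear)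

lemma cblinear_zero: "cblinear S \<Longrightarrow> S 0 = 0"
  unfolding cblinear_def by (simp add: linear_0 bounded_linear.linear)

lemma cblinear_scaleR: "cblinear S \<Longrightarrow> S (scaleR r x) = scaleR r (S x)"
  unfolding cblinear_def by (simp add: linear_scale bounded_linear.linear)

lemma cblinear_onorm: "cblinear S \<Longrightarrow> norm (S x) \<le> onorm S * norm x"
  unfolding cblinear_def by (simp add: onorm)

lemma cblinear_compose: "cblinear S \<Longrightarrow> cblinear U \<Longrightarrow> cblinear (S \<circ> U)"
  unfolding cblinear_def by (auto intro: bounded_linear_compose[unfolded o_def] simp: o_def)

lemma cblinear_ident: "cblinear (\<lambda>x. x)"
  unfolding cblinear_def by (simp add: bounded_linear_ident)

lemma cblinear_diff_fun: "cblinear S \<Longrightarrow> cblinear U \<Longrightarrow> cblinear (\<lambda>x. S x - U x)"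
  unfolding cblinear_def by (simp add: bounded_linear_sub scaleC_diff_right)

lemma cblinear_scaleR_fun: "cblinear S \<Longrightarrow> cblinear (\<lambda>x. r *\<^sub>R S x)"
  unfolding cblinear_def
  by (simp add: bounded_linear_compose[OF bounded_linear_scaleR_right] scaleC_scaleR_commute)

lemma norm_cblinear_scaleR: "cblinear S \<Longrightarrow> norm (S (r *\<^sub>R x)) = \<bar>r\<bar> * norm (S x)"
  by (simp add: cblinear_scaleR)

lemma cblinearI:
  assumes "\<And>x y. S (x + y) = S x + S y" "\<And>c x. S (scaleC c x) = scaleC c (S x)"
    "\<And>x. norm (S x) \<le> norm x * K"
  shows "cblinear S"
  unfolding cblinear_def using assms
  by (auto intro!: bounded_linear_intro[where K=K] simp: scaleR_scaleC)

lemma csubspace_range: "cblinear S \<Longrightarrow> csubspace (range S)"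
  unfolding csubspace_def
  by (auto simp: cblinear_zero cblinear_add[symmetric] cblinear_scaleC[symmetric]
      intro: range_eqI[of _ _ 0])

text \<open>Riesz: the representing vector is a multiple of the normal \<open>w\<close> to the kernel of \<open>f\<close>.\<close>

lemma Riesz_representation:
  fixes f :: "'a::chilbert_space \<Rightarrow> complex"
  assumes bl: "bounded_linear f" and sc: "\<And>c x. f (scaleC c x) = c * f x"
  shows "\<exists>z. \<forall>x. f x = cinner x z"
proof (cases "\<forall>x. f x = 0")
  case False
  then obtain x0 where x0: "f x0 \<noteq> 0" by blast
  define K where "K = {x. f x = 0}"
  have f_diff: "f (x - y) = f x - f y" for x y
    using bl by (simp add: linear_diff bounded_linear.linear)
  interpret K: closed_csubspace K
  proof
    show "closed K" unfolding K_def
      by (intro closed_Collect_eq continuous_on_const linear_continuous_on bl)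
    show "csubspace K" unfolding K_def csubspace_def
      using sc sc[of 0 0] bl by (simp add: linear_add bounded_linear.linear)
  qed
  define w where "w = x0 - orth_proj K x0"
  have fw: "f w = f x0" using K.orth_proj_in[of x0] by (simp add: w_def f_diff K_def)
  have "w \<noteq> 0" using fw x0 sc[of 0 0] by auto
  then have ww: "cinner w w \<noteq> 0" by (simp add: cinner_eq_zero_iff)
  have "f x = cinner x (scaleC (cnj (f w / cinner w w)) w)" for x
  proof -
    have "f (x - scaleC (f x / f w) w) = 0" using x0 fw by (simp add: f_diff sc)
    then have "cinner w (x - scaleC (f x / f w) w) = 0"
      using K.orth_proj_orthogonal by (simp add: w_def K_def)
    then have "cinner (x - scaleC (f x / f w) w) w = 0"
      by (subst cinner_cnj) simp
    then have "cinner x w = (f x / f w) * cinner w w"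
      by (simp add: cinner_diff_left cinner_scaleC_left)
    then show ?thesis using x0 fw ww by (simp add: cinner_scaleC_right)
  qed
  then show ?thesis by blast
qed (auto intro: exI[of _ 0])

lemma ex_adjoint:
  fixes S :: "'a::chilbert_space \<Rightarrow> 'a"
  assumes S: "cblinear S"
  shows "\<exists>S'. cblinear S' \<and> (\<forall>x y. cinner (S x) y = cinner x (S' y))"
proof -
  have "\<exists>z. \<forall>x. cinner (S x) y = cinner x z" for y
    using S by (intro Riesz_representation bounded_linear_compose[OF bounded_linear_cinner_left,
          of S, unfolded o_def] cblinear_bounded_linear) (simp_all add: cblinear_scaleC cinner_scaleC_left)
  then obtain S' where S': "\<And>x y. cinner (S x) y = cinner x (S' y)" by metis
  have "norm (S' y) \<le> norm y * onorm S" for y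
  proof -
    have "(norm (S' y))\<^sup>2 = cmod (cinner (S (S' y)) y)" by (simp add: S' cmod_cinner_self)
    also have "\<dots> \<le> norm (S (S' y)) * norm y"
      by (rule norm_cinner_le)
    also have "\<dots> \<le> onorm S * norm (S' y) * norm y"
      by (intro mult_right_mono cblinear_onorm[OF S] norm_ge_zero)
    finally show ?thesis
      by (cases "S' y = 0") (auto simp: power2_eq_square mult.commute onorm_pos_le cblinear_bounded_linear[OF S])
  qed
  moreover have "S' (x + y) = S' x + S' y" for x y
    by (rule cinner_ext_right) (simp add: S'[symmetric] cinner_add_right)
  moreover have "S' (scaleC c x) = scaleC c (S' x)" for c x
    by (rule cinner_ext_right) (simp add: S'[symmetric] cinner_scaleC_right)
  ultimately have "cblinear S'" by (intro cblinearI)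
  with S' show ?thesis by blast
qed

lemma
  fixes S :: "'a::chilbert_space \<Rightarrow> 'a"
  assumes "cblinear S"
  shows cblinear_adjoint: "cblinear (adjoint S)"
    and cinner_adjoint: "cinner (S x) y = cinner x (adjoint S y)"
proof -
  have "\<exists>!S'. cblinear S' \<and> (\<forall>x y. cinner (S x) y = cinner x (S' y))"
  proof (rule ex_ex1I[OF ex_adjoint[OF assms]])
    fix S1 S2
    assume h1: "cblinear S1 \<and> (\<forall>x y. cinner (S x) y = cinner x (S1 y))"
      and h2: "cblinear S2 \<and> (\<forall>x y. cinner (S x) y = cinner x (S2 y))"
    have "cinner z (S1 y) = cinner z (S2 y)" for y z
    proof -
      have "cinner z (S1 y) = cinner (S z) y" using h1 by simp
      also have "\<dots> = cinner z (S2 y)" using h2 by simp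
      finally show ?thesis .
    qed
    then have "S1 y = S2 y" for y
      by (rule cinner_ext_right)
    then show "S1 = S2" ..
  qed
  then have "cblinear (adjoint S) \<and> (\<forall>x y. cinner (S x) y = cinner x (adjoint S y))"
    unfolding adjoint_def by (rule theI')
  then show "cblinear (adjoint S)" "cinner (S x) y = cinner x (adjoint S y)"
    by auto
qed

section \<open>Hermitian and positive operators\<close>

definition hermitian :: "('a::chilbert_space \<Rightarrow> 'a) \<Rightarrow> bool" where
  "hermitian S \<longleftrightarrow> (\<forall>x y. cinner (S x) y = cinner x (S y))"

lemma hermitianD: "hermitian S \<Longrightarrow> cinner (S x) y = cinner x (S y)"
  by (simp add: hermitian_def)

lemma hermitian_Im_cinner: "hermitian S \<Longrightarrow> Im (cinner (S x) x) = 0"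
  using hermitianD[of S x x] cinner_cnj[of x "S x"] by (metis cnj.simps(2) complex.expand neg_equal_zero)

lemma positive_opD:
  assumes "positive_op A"
  shows "cblinear A" "Re (cinner (A x) x) \<ge> 0"
  using assms by (auto simp: positive_op_def)

text \<open>Polarisation: a sesquilinear form that is real on the diagonal is Hermitian.\<close>

lemma positive_op_hermitian:
  fixes A :: "'a::chilbert_space \<Rightarrow> 'a"
  assumes pos: "positive_op A"
  shows "hermitian A"
proof -
  have A: "cblinear A" using pos by (simp add: positive_op_def)
  define q where "q x y = cinner (A x) y - cinner x (A y)" for x y
  have q_diag: "q x x = 0" for x
  proof -
    have "Im (cinner (A x) x) = 0" using pos by (simp add: positive_op_def)
    then show ?thesis by (simp add: q_def cinner_cnj[of x "A x"] complex_eq_iff)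
  qed
  have "q (x + y) (x + y) = q x x + q x y + q y x + q y y" for x y
    by (simp add: q_def cblinear_add[OF A] cinner_add_left cinner_add_right algebra_simps)
  then have q_plus: "q x y + q y x = 0" for x y by (simp add: q_diag)
  have "q (x + scaleC \<i> y) (x + scaleC \<i> y) = q x x - \<i> * q x y + \<i> * q y x + q y y" for x y
    by (simp add: q_def cblinear_add[OF A] cblinear_scaleC[OF A] cinner_add_left cinner_add_right
        cinner_scaleC_left cinner_scaleC_right algebra_simps)
  then have q_minus: "q y x - q x y = 0" for x y by (simp add: q_diag algebra_simps)
  have "q x y = 0" for x y using q_plus[of x y] q_minus[of x y] by (simp add: algebra_simps)
  then show ?thesis by (simp add: hermitian_def q_def)
qed

text \<open>If \<open>\<langle>B y, y\<rangle> = 0\<close>, then positivity of \<open>B\<close> at \<open>y + t B y\<close> for a small \<open>t < 0\<close>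
  forces \<open>B y = 0\<close>.\<close>

lemma positive_op_eq_0:
  fixes B :: "'a::chilbert_space \<Rightarrow> 'a"
  assumes pos: "positive_op B" and y: "Re (cinner (B y) y) = 0"
  shows "B y = 0"
proof (rule ccontr)
  assume "B y \<noteq> 0"
  have B: "cblinear B" "hermitian B" using pos positive_op_hermitian by (auto simp: positive_op_def)
  define n where "n = (norm (B y))\<^sup>2"
  define K where "K = Re (cinner (B (B y)) (B y))"
  have n: "n > 0" using \<open>B y \<noteq> 0\<close> by (simp add: n_def)
  have K: "K \<ge> 0" using pos by (simp add: positive_op_def K_def)
  define t where "t = - n / (K + 1)"
  have t: "t < 0" using n K by (simp add: t_def)
  have "cinner (B (B y)) y = complex_of_real n"
    using hermitianD[OF B(2)] by (simp add: n_def cinner_self_norm)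
  then have "Re (cinner (B (y + t *\<^sub>R B y)) (y + t *\<^sub>R B y)) = t * (2 * n + t * K)"
    using y by (simp add: cblinear_add[OF B(1)] cblinear_scaleR[OF B(1)] cinner_add_left
        cinner_add_right cinner_scaleR_left cinner_scaleR_right cinner_self_norm n_def K_def
        power2_eq_square algebra_simps)
  moreover have "2 * n + t * K > 0"
  proof -
    have "- (t * K) = n * (K / (K + 1))" using K by (simp add: t_def)
    also have "\<dots> \<le> n" using n K by (intro mult_left_le) auto
    finally show ?thesis using n by linarith
  qed
  then have "t * (2 * n + t * K) < 0" using t by (simp add: mult_neg_pos)
  ultimately show False using positive_opD(2)[OF pos] by (metis not_le)
qed

lemma hermitian_norm_le:
  fixes X :: "'a::chilbert_space \<Rightarrow> 'a"
  assumes X: "cblinear X" "hermitian X"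
    and lo: "\<And>x. 0 \<le> Re (cinner (X x) x)" and hi: "\<And>x. Re (cinner (X x) x) \<le> (norm x)\<^sup>2"
  shows "norm (X x) \<le> norm x"
proof -
  have polar: "4 * Re (cinner (X u) v) \<le> 2 * (norm u)\<^sup>2 + 2 * (norm v)\<^sup>2" for u v
  proof -
    have "Re (cinner (X v) u) = Re (cinner (X u) v)"
      using hermitianD[OF X(2), of v u] Re_cinner_commute by metis
    then have "Re (cinner (X (u + v)) (u + v)) - Re (cinner (X (u - v)) (u - v))
        = 4 * Re (cinner (X u) v)"
      by (simp add: cblinear_add[OF X(1)] cblinear_diff[OF X(1)] cinner_add_left cinner_add_right
          cinner_diff_left cinner_diff_right)
    moreover have "(norm (u + v))\<^sup>2 \<le> 2 * (norm u)\<^sup>2 + 2 * (norm v)\<^sup>2"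
      using parallelogram_law[of u v] by (metis le_add_same_cancel1 zero_le_power2)
    ultimately show ?thesis using hi[of "u + v"] lo[of "u - v"] by linarith
  qed
  show ?thesis
  proof (cases "X x = 0")
    case False
    define r where "r = norm x / norm (X x)"
    have r: "r \<ge> 0" "norm (scaleR r (X x)) = norm x" using False by (simp_all add: r_def)
    have "Re (cinner (X x) (scaleR r (X x))) = norm x * norm (X x)"
      using False by (simp add: cinner_scaleR_right Re_cinner_self r_def power2_eq_square)
    then have "norm x * norm (X x) \<le> norm x * norm x"
      using polar[of x "scaleR r (X x)"] r(2) by (simp add: power2_eq_square)
    moreover have "x \<noteq> 0" using False cblinear_zero[OF X(1)] by auto
    ultimately show ?thesis by simp
  qed simp
qed

section \<open>The positive square root\<close>

text \<open>Coefficients of the binomial series \<open>(1 - t) powr (1/2) = (\<Sum>n. sqrt_coeff n * t ^ n)\<close>.\<close>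

definition sqrt_coeff :: "nat \<Rightarrow> real" where
  "sqrt_coeff n = (-1) ^ n * ((1/2) gchoose n)"

lemma sqrt_coeff_0 [simp]: "sqrt_coeff 0 = 1"
  by (simp add: sqrt_coeff_def)

lemma sqrt_coeff_Suc: "sqrt_coeff (Suc n) = sqrt_coeff n * (real n - 1/2) / (real n + 1)"
proof -
  have "(real n + 1) * ((1/2::real) gchoose (Suc n)) = (1/2 - real n) * ((1/2) gchoose n)"
    using gbinomial_mult_1[of "1/2::real" n] by (simp add: algebra_simps)
  then have "((1/2::real) gchoose (Suc n)) = (1/2 - real n) * ((1/2) gchoose n) / (real n + 1)"
    by (simp add: field_simps)
  then show ?thesis
    by (simp add: sqrt_coeff_def algebra_simps)
qed

lemma sqrt_coeff_Suc_nonpos: "sqrt_coeff (Suc n) \<le> 0"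
proof (induction n)
  case (Suc n)
  have "sqrt_coeff (Suc (Suc n)) = sqrt_coeff (Suc n) * ((real (Suc n) - 1/2) / (real (Suc n) + 1))"
    by (simp only: sqrt_coeff_Suc[of "Suc n"] times_divide_eq_right)
  moreover have "(real (Suc n) - 1/2) / (real (Suc n) + 1) \<ge> 0" by simp
  ultimately show ?case using Suc by (simp only: mult_nonpos_nonneg)
qed (simp add: sqrt_coeff_Suc)

lemma sqrt_coeff_telescope:
  "(\<Sum>n<N. - sqrt_coeff (Suc n)) + 2 * (real N + 1) * (- sqrt_coeff (Suc N)) = 1"
proof (induction N)
  case (Suc N)
  have "2 * (real (Suc N) + 1) * (- sqrt_coeff (Suc (Suc N))) = - sqrt_coeff (Suc N) * (2 * real N + 1)"
    by (simp add: sqrt_coeff_Suc[of "Suc N"] field_simps)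
  then show ?case using Suc by (simp add: algebra_simps)
qed (simp add: sqrt_coeff_Suc)

lemma sum_abs_sqrt_coeff_Suc_le: "(\<Sum>n<N. \<bar>sqrt_coeff (Suc n)\<bar>) \<le> 1"
proof -
  have "(\<Sum>n<N. \<bar>sqrt_coeff (Suc n)\<bar>) = (\<Sum>n<N. - sqrt_coeff (Suc n))"
    by (intro sum.cong refl) (simp add: sqrt_coeff_Suc_nonpos abs_of_nonpos)
  moreover have "2 * (real N + 1) * (- sqrt_coeff (Suc N)) \<ge> 0"
    using sqrt_coeff_Suc_nonpos[of N] by (intro mult_nonneg_nonneg) auto
  ultimately show ?thesis using sqrt_coeff_telescope[of N] by linarith
qed

lemma summable_abs_sqrt_coeff_Suc: "summable (\<lambda>n. \<bar>sqrt_coeff (Suc n)\<bar>)"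
  by (rule summableI_nonneg_bounded[where x=1]) (auto simp: sum_abs_sqrt_coeff_Suc_le)

lemma summable_abs_sqrt_coeff: "summable (\<lambda>n. \<bar>sqrt_coeff n\<bar>)"
  using summable_abs_sqrt_coeff_Suc summable_Suc_iff by blast

lemma suminf_sqrt_coeff_Suc_ge: "(\<Sum>n. sqrt_coeff (Suc n)) \<ge> -1"
proof -
  have abs_eq: "(\<lambda>n. \<bar>sqrt_coeff (Suc n)\<bar>) = (\<lambda>n. - sqrt_coeff (Suc n))"
    by (simp add: abs_of_nonpos sqrt_coeff_Suc_nonpos)
  have "(\<Sum>n. \<bar>sqrt_coeff (Suc n)\<bar>) \<le> 1"
    by (rule suminf_le_const[OF summable_abs_sqrt_coeff_Suc sum_abs_sqrt_coeff_Suc_le])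
  then show ?thesis
    using summable_abs_sqrt_coeff_Suc by (simp add: abs_eq suminf_minus summable_minus_iff)
qed

text \<open>The Cauchy square of the series is \<open>1 - t\<close> (Vandermonde's identity).\<close>

lemma sqrt_coeff_convolution:
  "(\<Sum>k\<le>n. sqrt_coeff k * sqrt_coeff (n - k)) = (if n = 0 then 1 else if n = 1 then -1 else 0)"
proof -
  have "(\<Sum>k\<le>n. sqrt_coeff k * sqrt_coeff (n - k))
      = (-1) ^ n * (\<Sum>k\<le>n. ((1/2::real) gchoose k) * ((1/2) gchoose (n - k)))"
    unfolding sum_distrib_left
  proof (intro sum.cong refl)
    fix k assume "k \<in> {..n}"
    then have "(-1::real) ^ k * (-1) ^ (n - k) = (-1) ^ n"
      by (simp add: power_add[symmetric])
    then show "sqrt_coeff k * sqrt_coeff (n - k) = (-1) ^ n * (((1/2) gchoose k) * ((1/2) gchoose (n - k)))"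
      by (simp add: sqrt_coeff_def algebra_simps)
  qed
  also have "(\<Sum>k\<le>n. ((1/2::real) gchoose k) * ((1/2) gchoose (n - k))) = of_nat (1 choose n)"
    using gbinomial_Vandermonde[of "1/2::real" "1/2" n] by (simp add: atMost_atLeast0 binomial_gbinomial)
  finally show ?thesis
    by (cases n; cases "n - 1") (auto simp: binomial_eq_0)
qed

text \<open>For real series this follows from the library's Cauchy product theorem, applied to the norms.\<close>

lemma tendsto_sum_square_minus_triangle:
  fixes a :: "nat \<Rightarrow> 'a::real_normed_vector" and b :: "nat \<Rightarrow> 'b::real_normed_vector"
  assumes a: "summable (\<lambda>k. norm (a k))" and b: "summable (\<lambda>k. norm (b k))"
  shows "(\<lambda>n. \<Sum>(i,j)\<in>{..<n} \<times> {..<n} - {(i,j). i + j < n}. norm (a i) * norm (b j)) \<longlonglongrightarrow> 0"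
proof -
  let ?f = "\<lambda>(i,j). norm (a i) * norm (b j)"
  have "(\<lambda>n. (\<Sum>k<n. norm (a k)) * (\<Sum>k<n. norm (b k))) \<longlonglongrightarrow> (\<Sum>k. norm (a k)) * (\<Sum>k. norm (b k))"
    using a b by (intro tendsto_mult summable_LIMSEQ)
  then have square: "(\<lambda>n. sum ?f ({..<n} \<times> {..<n})) \<longlonglongrightarrow> (\<Sum>k. norm (a k)) * (\<Sum>k. norm (b k))"
    by (simp only: sum_product sum.Sigma[rule_format] finite_lessThan)
  have "(\<lambda>k. \<Sum>i\<le>k. norm (a i) * norm (b (k - i))) sums ((\<Sum>k. norm (a k)) * (\<Sum>k. norm (b k)))"
    using a b by (intro Cauchy_product_sums) simp_all
  then have triangle: "(\<lambda>n. sum ?f {(i,j). i + j < n}) \<longlonglongrightarrow> (\<Sum>k. norm (a k)) * (\<Sum>k. norm (b k))"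
    by (simp only: sums_def sum.triangle_reindex)
  have "{(i,j). i + j < n} \<subseteq> {..<n} \<times> {..<n}" for n :: nat by auto
  then show ?thesis
    using tendsto_diff[OF square triangle] by (simp add: sum_diff)
qed

lemma bounded_bilinear_Cauchy_product_sums:
  fixes a :: "nat \<Rightarrow> 'a::banach" and b :: "nat \<Rightarrow> 'b::banach"
    and prod :: "'a \<Rightarrow> 'b \<Rightarrow> 'c::banach"
  assumes bb: "bounded_bilinear prod"
    and a: "summable (\<lambda>k. norm (a k))" and b: "summable (\<lambda>k. norm (b k))"
  shows "(\<lambda>k. \<Sum>i\<le>k. prod (a i) (b (k - i))) sums prod (\<Sum>k. a k) (\<Sum>k. b k)"
proof -
  obtain K where K: "\<And>x y. norm (prod x y) \<le> norm x * norm y * K"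
    using bounded_bilinear.bounded[OF bb] by blast
  let ?square = "\<lambda>n::nat. {..<n} \<times> {..<n}" and ?triangle = "\<lambda>n::nat. {(i,j). i + j < n}"
  let ?g = "\<lambda>(i,j). prod (a i) (b j)" and ?f = "\<lambda>(i,j). norm (a i) * norm (b j)"
  have sub: "?triangle n \<subseteq> ?square n" for n by auto
  have "(\<lambda>n. prod (\<Sum>k<n. a k) (\<Sum>k<n. b k)) \<longlonglongrightarrow> prod (\<Sum>k. a k) (\<Sum>k. b k)"
    by (intro bounded_bilinear.tendsto[OF bb] summable_LIMSEQ summable_norm_cancel[OF a]
        summable_norm_cancel[OF b])
  moreover have "prod (\<Sum>k<n. a k) (\<Sum>k<n. b k) = sum ?g (?square n)" for n
  proof -
    have "prod (\<Sum>k<n. a k) (\<Sum>k<n. b k) = (\<Sum>i<n. \<Sum>j<n. prod (a i) (b j))"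
      unfolding bounded_bilinear.sum_left[OF bb] by (simp only: bounded_bilinear.sum_right[OF bb])
    then show ?thesis by (simp add: sum.cartesian_product)
  qed
  ultimately have square: "(\<lambda>n. sum ?g (?square n)) \<longlonglongrightarrow> prod (\<Sum>k. a k) (\<Sum>k. b k)"
    by simp
  have bound: "norm (sum ?g D) \<le> sum ?f D * K" for D
  proof -
    have "norm (sum ?g D) \<le> (\<Sum>(i,j)\<in>D. norm (prod (a i) (b j)))"
      by (rule norm_sum[THEN order_trans]) (simp add: case_prod_unfold)
    also have "\<dots> \<le> (\<Sum>(i,j)\<in>D. norm (a i) * norm (b j) * K)"
      by (rule sum_mono) (simp add: case_prod_unfold K)
    finally show ?thesis by (simp add: sum_distrib_right case_prod_unfold)
  qed
  have "(\<lambda>n. sum ?g (?square n - ?triangle n)) \<longlonglongrightarrow> 0"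
    by (rule Lim_null_comparison[OF always_eventually
          tendsto_mult_left_zero[OF tendsto_sum_square_minus_triangle[OF a b]]]) (use bound in blast)
  then have "(\<lambda>n. sum ?g (?square n) - sum ?g (?triangle n)) \<longlonglongrightarrow> 0"
    by (simp add: sum_diff[OF _ sub])
  with square have "(\<lambda>n. sum ?g (?triangle n)) \<longlonglongrightarrow> prod (\<Sum>k. a k) (\<Sum>k. b k)"
    by (rule Lim_transform2)
  then show ?thesis
    by (simp only: sums_def sum.triangle_reindex)
qed

text \<open>For \<open>0 \<le> X \<le> I\<close>, \<open>sqrt_series X\<close> is the binomial series for \<open>(I - X) powr (1/2)\<close>.\<close>

definition sqrt_series :: "('a::chilbert_space \<Rightarrow> 'a) \<Rightarrow> 'a \<Rightarrow> 'a" where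
  "sqrt_series X x = (\<Sum>n. sqrt_coeff n *\<^sub>R (X ^^ n) x)"

locale positive_contraction =
  fixes X :: "'a::chilbert_space \<Rightarrow> 'a"
  assumes cblinear: "cblinear X" and hermitian: "hermitian X"
    and Re_cinner_nonneg: "\<And>x. 0 \<le> Re (cinner (X x) x)"
    and Re_cinner_le: "\<And>x. Re (cinner (X x) x) \<le> (norm x)\<^sup>2"
begin

lemma cblinear_funpow: "cblinear (X ^^ n)"
  by (induction n) (simp_all add: cblinear_ident cblinear_compose[OF cblinear, unfolded o_def])

lemma hermitian_funpow: "hermitian (X ^^ n)"
proof (induction n)
  case (Suc n)
  show ?case
    unfolding hermitian_def funpow.simps(2) o_def
    by (metis Suc hermitian hermitianD funpow_swap1)
qed (simp add: hermitian_def)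

lemma norm_funpow_le: "norm ((X ^^ n) x) \<le> norm x"
  by (induction n) (auto intro: order_trans[OF hermitian_norm_le[OF cblinear hermitian
        Re_cinner_nonneg Re_cinner_le]])

lemma summable_norm_sqrt_terms: "summable (\<lambda>n. norm (sqrt_coeff n *\<^sub>R (X ^^ n) x))"
  by (rule summable_comparison_test[OF _ summable_mult2[OF summable_abs_sqrt_coeff, of "norm x"]])
    (auto intro!: mult_left_mono norm_funpow_le)

lemma sqrt_series_sums: "(\<lambda>n. sqrt_coeff n *\<^sub>R (X ^^ n) x) sums sqrt_series X x"
  unfolding sqrt_series_def by (rule summable_sums[OF summable_norm_cancel[OF summable_norm_sqrt_terms]])

lemma cblinear_sqrt_series: "cblinear (sqrt_series X)"
proof (rule cblinearI)
  show "sqrt_series X (x + y) = sqrt_series X x + sqrt_series X y" for x y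
    using sums_add[OF sqrt_series_sums[of x] sqrt_series_sums[of y]]
    by (intro sums_unique2[OF sqrt_series_sums]) (simp add: cblinear_add[OF cblinear_funpow] scaleR_add_right)
  show "sqrt_series X (scaleC c x) = scaleC c (sqrt_series X x)" for c x
    using bounded_linear.sums[OF bounded_linear_scaleC sqrt_series_sums[of x], of c]
    by (intro sums_unique2[OF sqrt_series_sums])
      (simp add: cblinear_scaleC[OF cblinear_funpow] scaleC_scaleR_commute)
  show "norm (sqrt_series X x) \<le> norm x * (\<Sum>n. \<bar>sqrt_coeff n\<bar>)" for x
  proof -
    have "norm (sqrt_series X x) \<le> (\<Sum>n. norm (sqrt_coeff n *\<^sub>R (X ^^ n) x))"
      unfolding sqrt_series_def by (rule summable_norm[OF summable_norm_sqrt_terms])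
    also have "\<dots> \<le> (\<Sum>n. \<bar>sqrt_coeff n\<bar> * norm x)"
      by (intro suminf_le summable_norm_sqrt_terms summable_mult2[OF summable_abs_sqrt_coeff])
        (auto intro!: mult_left_mono norm_funpow_le)
    finally show ?thesis
      by (simp add: suminf_mult[OF summable_abs_sqrt_coeff] mult.commute)
  qed
qed

lemma sqrt_series_commute:
  assumes C: "cblinear C" and CX: "\<And>x. C (X x) = X (C x)"
  shows "C (sqrt_series X x) = sqrt_series X (C x)"
proof -
  have "C ((X ^^ n) x) = (X ^^ n) (C x)" for n
    by (induction n) (simp_all add: CX)
  then show ?thesis
    using bounded_linear.sums[OF cblinear_bounded_linear[OF C] sqrt_series_sums[of x]]
    by (intro sums_unique2[OF _ sqrt_series_sums]) (simp add: cblinear_scaleR[OF C])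
qed

lemma cinner_sqrt_series_sums:
  "(\<lambda>n. complex_of_real (sqrt_coeff n) * cinner ((X ^^ n) x) y) sums cinner (sqrt_series X x) y"
  using bounded_linear.sums[OF bounded_linear_cinner_left[of y] sqrt_series_sums[of x]]
  by (simp add: cinner_scaleR_left)

lemma hermitian_sqrt_series: "hermitian (sqrt_series X)"
  unfolding hermitian_def
proof (intro allI)
  fix x y
  have "(\<lambda>n. complex_of_real (sqrt_coeff n) * cinner x ((X ^^ n) y)) sums cinner x (sqrt_series X y)"
    using bounded_linear.sums[OF bounded_bilinear.bounded_linear_right[OF bounded_bilinear_cinner]
        sqrt_series_sums, of x y]
    by (simp add: cinner_scaleR_right)
  moreover have "(\<lambda>n. complex_of_real (sqrt_coeff n) * cinner x ((X ^^ n) y)) sums cinner (sqrt_series X x) y"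
    using cinner_sqrt_series_sums by (simp only: hermitianD[OF hermitian_funpow])
  ultimately show "cinner (sqrt_series X x) y = cinner x (sqrt_series X y)"
    by (rule sums_unique2[rotated])
qed

text \<open>With \<open>r n = \<langle>X\<^sup>n x, x\<rangle> \<le> \<parallel>x\<parallel>\<^sup>2\<close>, all coefficients after the first are \<open>\<le> 0\<close> and sum
  to at least \<open>-1\<close>, so \<open>\<Sum>n. sqrt_coeff n * r n \<ge> r 0 - \<parallel>x\<parallel>\<^sup>2 = 0\<close>.\<close>

lemma Re_cinner_sqrt_series_nonneg: "Re (cinner (sqrt_series X x) x) \<ge> 0"
proof -
  define r where "r n = Re (cinner ((X ^^ n) x) x)" for n
  define s where "s = Re (cinner (sqrt_series X x) x)"
  define f where "f n = sqrt_coeff n * r n" for n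
  have "f sums s"
    using bounded_linear.sums[OF bounded_linear_Re cinner_sqrt_series_sums[of x x]]
    by (simp add: r_def s_def f_def[abs_def])
  then have "(\<lambda>n. f (Suc n)) sums (s - f 0)"
    using sums_Suc_iff[of f "s - f 0"] by simp
  then have tail: "(\<lambda>n. sqrt_coeff (Suc n) * r (Suc n)) sums (s - (norm x)\<^sup>2)"
    by (simp add: f_def r_def Re_cinner_self)
  have r_le: "r n \<le> (norm x)\<^sup>2" for n
  proof -
    have "r n \<le> cmod (cinner ((X ^^ n) x) x)" unfolding r_def by (rule complex_Re_le_cmod)
    also have "\<dots> \<le> norm ((X ^^ n) x) * norm x" by (rule norm_cinner_le)
    also have "\<dots> \<le> norm x * norm x" by (rule mult_right_mono[OF norm_funpow_le norm_ge_zero])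
    finally show ?thesis by (simp add: power2_eq_square)
  qed
  have "summable (\<lambda>n. sqrt_coeff (Suc n))"
    by (rule summable_rabs_cancel[OF summable_abs_sqrt_coeff_Suc])
  then have head: "(\<lambda>n. sqrt_coeff (Suc n) * (norm x)\<^sup>2) sums ((\<Sum>n. sqrt_coeff (Suc n)) * (norm x)\<^sup>2)"
    by (intro sums_mult2 summable_sums)
  have "sqrt_coeff (Suc n) * (norm x)\<^sup>2 \<le> sqrt_coeff (Suc n) * r (Suc n)" for n
    by (rule mult_left_mono_neg[OF r_le sqrt_coeff_Suc_nonpos])
  then have "(\<Sum>n. sqrt_coeff (Suc n)) * (norm x)\<^sup>2 \<le> s - (norm x)\<^sup>2"
    using head tail by (rule sums_le)
  moreover have "- (norm x)\<^sup>2 \<le> (\<Sum>n. sqrt_coeff (Suc n)) * (norm x)\<^sup>2"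
    using mult_right_mono[OF suminf_sqrt_coeff_Suc_ge zero_le_power2[of "norm x"]] by simp
  ultimately show ?thesis by (simp add: s_def)
qed

lemma positive_op_sqrt_series: "positive_op (sqrt_series X)"
  using cblinear_sqrt_series hermitian_Im_cinner[OF hermitian_sqrt_series]
    Re_cinner_sqrt_series_nonneg by (simp add: positive_op_def)

text \<open>Squaring the series is a Cauchy product, taken for the bilinear pairing of the operators
  \<open>X\<^sup>n\<close> (as elements of the Banach space of bounded operators) with the vectors \<open>X\<^sup>n x\<close>.\<close>

lemma sqrt_terms_convolution_sums:
  "(\<lambda>k. \<Sum>i\<le>k. sqrt_coeff i *\<^sub>R (X ^^ i) (sqrt_coeff (k - i) *\<^sub>R (X ^^ (k - i)) x)) sums (x - X x)"
proof -
  define g where "g k = (if k = 0 then x else if k = 1 then - X x else 0)" for k :: nat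
  have "(\<Sum>i\<le>k. sqrt_coeff i *\<^sub>R (X ^^ i) (sqrt_coeff (k - i) *\<^sub>R (X ^^ (k - i)) x)) = g k" for k
  proof -
    have "(X ^^ i) ((X ^^ (k - i)) x) = (X ^^ k) x" if "i \<le> k" for i
      using that funpow_add[of i "k - i" X] by (simp add: o_def)
    then have "(\<Sum>i\<le>k. sqrt_coeff i *\<^sub>R (X ^^ i) (sqrt_coeff (k - i) *\<^sub>R (X ^^ (k - i)) x))
        = (\<Sum>i\<le>k. sqrt_coeff i * sqrt_coeff (k - i)) *\<^sub>R (X ^^ k) x"
      by (simp add: cblinear_scaleR[OF cblinear_funpow] scaleR_sum_left)
    then show ?thesis
      by (simp add: sqrt_coeff_convolution g_def)
  qed
  moreover have "g sums (x - X x)"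
    using sums_finite[of "{0, 1}" g] by (simp add: g_def)
  ultimately show ?thesis by simp
qed

lemma sqrt_series_square: "sqrt_series X (sqrt_series X x) = x - X x"
proof -
  define F where "F k = Blinfun (X ^^ k)" for k
  have F: "blinfun_apply (F k) = X ^^ k" for k
    unfolding F_def by (rule bounded_linear_Blinfun_apply[OF cblinear_bounded_linear[OF cblinear_funpow]])
  have norm_F: "norm (F k) \<le> 1" for k
    by (rule norm_blinfun_bound) (auto simp: F norm_funpow_le)
  define a where "a k = sqrt_coeff k *\<^sub>R F k" for k
  define b where "b k = sqrt_coeff k *\<^sub>R (X ^^ k) x" for k
  have sa: "summable (\<lambda>k. norm (a k))"
    by (rule summable_comparison_test[OF _ summable_abs_sqrt_coeff])
      (auto simp: a_def intro!: mult_left_le norm_F)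
  have sb: "summable (\<lambda>k. norm (b k))" unfolding b_def by (rule summable_norm_sqrt_terms)
  have sum_a: "blinfun_apply (\<Sum>k. a k) v = sqrt_series X v" for v
    using bounded_linear.suminf[OF bounded_bilinear.bounded_linear_left[OF bounded_bilinear_blinfun_apply]
        summable_norm_cancel[OF sa]]
    by (simp add: a_def F sqrt_series_def blinfun.scaleR_left)
  have sum_b: "(\<Sum>k. b k) = sqrt_series X x" by (simp add: b_def sqrt_series_def)
  have "(\<lambda>k. \<Sum>i\<le>k. blinfun_apply (a i) (b (k - i))) sums (x - X x)"
    using sqrt_terms_convolution_sums by (simp add: a_def b_def F blinfun.scaleR_left)
  with bounded_bilinear_Cauchy_product_sums[OF bounded_bilinear_blinfun_apply sa sb]
  have "blinfun_apply (\<Sum>k. a k) (\<Sum>k. b k) = x - X x"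
    by (rule sums_unique2)
  then show ?thesis by (simp add: sum_a sum_b)
qed

end

lemma positive_contraction_rescaled:
  fixes A :: "'a::chilbert_space \<Rightarrow> 'a"
  assumes A: "positive_op A"
  shows "positive_contraction (\<lambda>x. x - (1 / (onorm A + 1)) *\<^sub>R A x)"
proof -
  define s where "s = onorm A + 1"
  have s: "s > 0"
    using onorm_pos_le[OF cblinear_bounded_linear[OF positive_opD(1)[OF A]]] by (simp add: s_def)
  have Re_le: "Re (cinner (A x) x) \<le> s * (norm x)\<^sup>2" for x
  proof -
    have "Re (cinner (A x) x) \<le> norm (A x) * norm x"
      by (rule order_trans[OF complex_Re_le_cmod norm_cinner_le])
    also have "\<dots> \<le> onorm A * norm x * norm x"
      by (intro mult_right_mono cblinear_onorm[OF positive_opD(1)[OF A]] norm_ge_zero)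
    finally have "Re (cinner (A x) x) \<le> onorm A * (norm x)\<^sup>2"
      by (simp add: power2_eq_square mult.assoc)
    then show ?thesis
      using zero_le_power2[of "norm x"] unfolding s_def distrib_right by linarith
  qed
  show ?thesis
    unfolding s_def[symmetric]
  proof
    show "cblinear (\<lambda>x. x - (1 / s) *\<^sub>R A x)"
      by (intro cblinear_diff_fun cblinear_ident cblinear_scaleR_fun positive_opD(1)[OF A])
    show "hermitian (\<lambda>x. x - (1 / s) *\<^sub>R A x)"
      using hermitianD[OF positive_op_hermitian[OF A]]
      by (simp add: hermitian_def cinner_diff_left cinner_diff_right cinner_scaleR_left cinner_scaleR_right)
    fix x
    have Re: "Re (cinner (x - (1 / s) *\<^sub>R A x) x) = (norm x)\<^sup>2 - Re (cinner (A x) x) / s"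
      by (simp add: cinner_diff_left cinner_scaleR_left Re_cinner_self)
    show "0 \<le> Re (cinner (x - (1 / s) *\<^sub>R A x) x)"
      using Re_le[of x] s by (simp add: Re divide_le_eq mult.commute)
    show "Re (cinner (x - (1 / s) *\<^sub>R A x) x) \<le> (norm x)\<^sup>2"
      using positive_opD(2)[OF A, of x] s by (simp add: Re)
  qed
qed

text \<open>The witness is \<open>\<surd>s \<cdot> (I - X) powr (1/2)\<close> for the contraction \<open>X = I - A/s\<close>; as a norm
  limit of polynomials in \<open>A\<close>, it commutes with every operator commuting with \<open>A\<close>, which is
  what makes it unique.\<close>

lemma ex_positive_sqrt:
  fixes A :: "'a::chilbert_space \<Rightarrow> 'a"
  assumes A: "positive_op A"
  shows "\<exists>B. positive_op B \<and> (\<forall>x. B (B x) = A x)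
    \<and> (\<forall>C. cblinear C \<and> (\<forall>x. C (A x) = A (C x)) \<longrightarrow> (\<forall>x. C (B x) = B (C x)))"
proof -
  define s where "s = onorm A + 1"
  have s: "s > 0"
    using onorm_pos_le[OF cblinear_bounded_linear[OF positive_opD(1)[OF A]]] by (simp add: s_def)
  define X where "X x = x - (1 / s) *\<^sub>R A x" for x
  interpret X: positive_contraction X
    unfolding X_def s_def by (rule positive_contraction_rescaled[OF A])
  define B where "B x = sqrt s *\<^sub>R sqrt_series X x" for x
  have "positive_op B"
    using X.positive_op_sqrt_series s cblinear_scaleR_fun[OF X.cblinear_sqrt_series, of "sqrt s"]
    unfolding positive_op_def B_def by (simp add: cinner_scaleR_left)
  moreover have "B (B x) = A x" for x
    using s by (simp add: B_def cblinear_scaleR[OF X.cblinear_sqrt_series] X.sqrt_series_square X_def)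
  moreover have "C (B x) = B (C x)" if "cblinear C" "\<And>x. C (A x) = A (C x)" for C x
    using that by (simp add: B_def cblinear_scaleR X.sqrt_series_commute X_def cblinear_diff)
  ultimately show ?thesis by blast
qed

lemma positive_sqrt_unique:
  fixes A B C :: "'a::chilbert_space \<Rightarrow> 'a"
  assumes B: "positive_op B" "\<And>x. B (B x) = A x"
    and B_commute: "\<And>C' z. cblinear C' \<Longrightarrow> (\<And>x. C' (A x) = A (C' x)) \<Longrightarrow> C' (B z) = B (C' z)"
    and C: "positive_op C" "\<And>x. C (C x) = A x"
  shows "C x = B x"
proof -
  have Bl: "cblinear B" and Cl: "cblinear C" using B(1) C(1) by (simp_all add: positive_op_def)
  have CB: "C (B x) = B (C x)" for x
    by (rule B_commute[OF Cl]) (simp add: C(2)[symmetric])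
  define y where "y = B x - C x"
  have "B y + C y = 0"
    by (simp add: y_def cblinear_diff[OF Bl] cblinear_diff[OF Cl] B(2) C(2) CB)
  then have "Re (cinner (B y) y) + Re (cinner (C y) y) = 0"
    by (metis cinner_add_left cinner_zero_left plus_complex.sel(1) zero_complex.sel(1))
  then have "Re (cinner (B y) y) = 0" "Re (cinner (C y) y) = 0"
    using positive_opD(2)[OF B(1), of y] positive_opD(2)[OF C(1), of y] by linarith+
  then have "B y = 0" "C y = 0"
    using positive_op_eq_0[OF B(1)] positive_op_eq_0[OF C(1)] by auto
  then have "cinner y y = 0"
    using hermitianD[OF positive_op_hermitian[OF B(1)], of x y]
      hermitianD[OF positive_op_hermitian[OF C(1)], of x y]
    by (simp add: y_def cinner_diff_left)
  then show ?thesis by (simp add: y_def cinner_eq_zero_iff)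
qed

lemma
  fixes A :: "'a::chilbert_space \<Rightarrow> 'a"
  assumes A: "positive_op A"
  shows op_sqrt_positive: "positive_op (op_sqrt A)"
    and op_sqrt_square: "op_sqrt A (op_sqrt A x) = A x"
proof -
  obtain B where B: "positive_op B" "\<And>x. B (B x) = A x"
    and B_commute: "\<And>C x. cblinear C \<Longrightarrow> (\<And>x. C (A x) = A (C x)) \<Longrightarrow> C (B x) = B (C x)"
    using ex_positive_sqrt[OF A] by blast
  have "op_sqrt A = B"
    unfolding op_sqrt_def
  proof (rule the_equality)
    show "positive_op B \<and> B \<circ> B = A" using B by auto
    fix C assume C: "positive_op C \<and> C \<circ> C = A"
    then have "C (C x) = A x" for x by (auto simp: fun_eq_iff)
    then have "C x = B x" for x
      using positive_sqrt_unique[where A=A and B=B and C=C, OF B B_commute] C by blast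
    then show "C = B" ..
  qed
  then show "positive_op (op_sqrt A)" "op_sqrt A (op_sqrt A x) = A x"
    using B by simp_all
qed

section \<open>The range space of the square root\<close>

locale positive_operator =
  fixes A :: "'a::chilbert_space \<Rightarrow> 'a"
  assumes positive: "positive_op A"
begin

abbreviation "R \<equiv> op_sqrt A"
abbreviation "M \<equiv> closure (range A)"
abbreviation "P \<equiv> projP A"

lemma cblinear_A: "cblinear A" by (rule positive_opD(1)[OF positive])
lemma A_hermitian: "cinner (A x) y = cinner x (A y)" by (rule hermitianD[OF positive_op_hermitian[OF positive]])
lemma cblinear_R: "cblinear R" by (rule positive_opD(1)[OF op_sqrt_positive[OF positive]])
lemma R_hermitian: "cinner (R x) y = cinner x (R y)"
  by (rule hermitianD[OF positive_op_hermitian[OF op_sqrt_positive[OF positive]]])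
lemma R_R: "R (R x) = A x" by (rule op_sqrt_square[OF positive])

sublocale M: closed_csubspace M
  by unfold_locales (auto intro: csubspace_closure csubspace_range cblinear_A)

lemma P_eq_orth_proj: "P = orth_proj M" by (simp add: projP_def)

lemma P_in: "P x \<in> M" by (simp add: P_eq_orth_proj M.orth_proj_in)
lemma P_orthogonal: "m \<in> M \<Longrightarrow> cinner (x - P x) m = 0" by (simp add: P_eq_orth_proj M.orth_proj_orthogonal)
lemma P_id: "m \<in> M \<Longrightarrow> P m = m" by (simp add: P_eq_orth_proj M.orth_proj_id)
lemma P_idem: "P (P x) = P x" by (simp add: P_eq_orth_proj M.orth_proj_idem)
lemma cblinear_P: "cblinear P" by (simp add: P_eq_orth_proj M.cblinear_orth_proj)
lemma P_self_adjoint: "cinner (P x) y = cinner x (P y)" by (simp add: P_eq_orth_proj M.orth_proj_self_adjoint)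
lemma norm_P_le: "norm (P x) \<le> norm x" by (simp add: P_eq_orth_proj M.norm_orth_proj_le)

lemma cblinear_compression: "cblinear T \<Longrightarrow> cblinear (\<lambda>x. P (T (P x)))"
  using cblinear_compose[OF cblinear_P cblinear_compose[of T P]] cblinear_P by (simp add: o_def)

lemma R_eq_0_iff: "R z = 0 \<longleftrightarrow> A z = 0"
proof
  assume "A z = 0"
  then have "cinner (R z) (R z) = 0" by (simp add: R_hermitian R_R)
  then show "R z = 0" by (simp add: cinner_eq_zero_iff)
qed (metis R_R cblinear_zero[OF cblinear_R])

lemma orthogonal_M_iff: "(\<forall>m\<in>M. cinner z m = 0) \<longleftrightarrow> A z = 0"
proof
  assume "\<forall>m\<in>M. cinner z m = 0"
  then have "cinner z (A (A z)) = 0" by (simp add: closure_subset[THEN subsetD])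
  then show "A z = 0" using A_hermitian[of z "A z"] by (simp add: cinner_eq_zero_iff)
next
  assume "A z = 0"
  then have "range A \<subseteq> {m. cinner z m = 0}" by (auto simp: A_hermitian[symmetric])
  moreover have "closed {m. cinner z m = 0}" by (intro closed_Collect_eq continuous_intros)
  ultimately show "\<forall>m\<in>M. cinner z m = 0" using closure_minimal by blast
qed

lemma R_diff_P: "R (x - P x) = 0"
  using P_orthogonal orthogonal_M_iff R_eq_0_iff by blast

lemma R_P: "R (P x) = R x"
  using R_diff_P[of x] by (simp add: cblinear_diff[OF cblinear_R])

lemma M_R_eq_0: "m \<in> M \<Longrightarrow> R m = 0 \<Longrightarrow> m = 0"
  using orthogonal_M_iff R_eq_0_iff cinner_eq_zero_iff by blast

lemma R_in_M: "R x \<in> M"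
proof -
  have "R (R x - P (R x)) = 0" by (rule R_diff_P)
  then have "cinner (R x - P (R x)) (R x) = 0" using R_hermitian[of "R x - P (R x)" x] by simp
  moreover have "cinner (R x - P (R x)) (P (R x)) = 0" using P_orthogonal[OF P_in] by simp
  ultimately have "cinner (R x - P (R x)) (R x - P (R x)) = 0" by (simp add: cinner_diff_right)
  then show ?thesis using P_in[of "R x"] by (simp add: cinner_eq_zero_iff)
qed

lemma closure_range_R: "closure (range R) = M"
proof
  show "closure (range R) \<subseteq> M" by (rule closure_minimal) (auto simp: R_in_M)
  show "M \<subseteq> closure (range R)" by (rule closure_mono) (auto simp: R_R[symmetric])
qed

lemma R_inj_on_M: "m1 \<in> M \<Longrightarrow> m2 \<in> M \<Longrightarrow> R m1 = R m2 \<Longrightarrow> m1 = m2"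
  using M_R_eq_0[of "m1 - m2"] csubspace_diff[OF M.csubspace] cblinear_diff[OF cblinear_R] by auto

lemma P_eq_if_R_eq: "R x = R y \<Longrightarrow> P x = P y"
  using R_inj_on_M[OF P_in P_in] R_P by metis

lemma A_norm_eq: "A_norm A x = norm (R x)"
  by (simp add: A_norm_def R_R[symmetric] R_hermitian[of "R x"] Re_cinner_self)

lemma RA_norm_R: "RA_norm A (R y) = norm (P y)"
proof -
  have "R (SOME x. R x = R y) = R y" by (rule someI) (rule refl)
  then show ?thesis unfolding RA_norm_def by (metis P_eq_if_R_eq)
qed

lemma diamond_eqI:
  assumes S: "cblinear S" and D: "cblinear D"
    and SD: "\<And>x. adjoint S (R x) = R (D x)" and DM: "\<And>x. D x \<in> M"
  shows "diamond A S = D"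
  unfolding diamond_def
proof (rule the_equality)
  show "cblinear D \<and> adjoint S \<circ> R = R \<circ> D \<and> range D \<subseteq> closure (range R)"
    using D SD DM closure_range_R by (auto simp: fun_eq_iff)
  fix D' assume D': "cblinear D' \<and> adjoint S \<circ> R = R \<circ> D' \<and> range D' \<subseteq> closure (range R)"
  show "D' = D"
  proof
    fix x
    have "D' x \<in> M" using D' closure_range_R by auto
    moreover have "R (D' x) = R (D x)" using D' SD by (metis comp_apply)
    ultimately show "D' x = D x" using R_inj_on_M DM by blast
  qed
qed

lemma ex_R_unit:
  assumes "A \<noteq> (\<lambda>x. 0)"
  obtains u where "u \<in> M" "norm (R u) = 1"
proof -
  obtain x where "A x \<noteq> 0" using assms by auto
  then have Rx: "R x \<noteq> 0" using R_eq_0_iff by blast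
  show ?thesis
    using Rx by (intro that[of "(1 / norm (R x)) *\<^sub>R P x"] csubspace_scaleR[OF M.csubspace P_in])
      (simp add: cblinear_scaleR[OF cblinear_R] R_P)
qed

lemma ex_P_unit:
  assumes "A \<noteq> (\<lambda>x. 0)"
  obtains z where "norm (P z) = 1"
proof -
  obtain u where "u \<in> M" "norm (R u) = 1" using ex_R_unit[OF assms] .
  then have "u \<noteq> 0" using cblinear_zero[OF cblinear_R] by auto
  then show ?thesis
    using \<open>u \<in> M\<close> by (intro that[of "(1 / norm u) *\<^sub>R u"])
      (simp add: P_id csubspace_scaleR[OF M.csubspace])
qed

end

section \<open>Norms on the range space\<close>

lemma Sup_unit_level_set:
  fixes f g :: "'a::real_vector \<Rightarrow> real"
  assumes cone: "\<And>r x. 0 < r \<Longrightarrow> x \<in> X \<Longrightarrow> r *\<^sub>R x \<in> X"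
    and f_hom: "\<And>r x. 0 < r \<Longrightarrow> f (r *\<^sub>R x) = r * f x"
    and g_hom: "\<And>r x. 0 < r \<Longrightarrow> g (r *\<^sub>R x) = r * g x"
    and nonneg: "\<And>x. 0 \<le> f x" "\<And>x. 0 \<le> g x"
    and f_le: "\<And>x. x \<in> X \<Longrightarrow> f x \<le> C * g x"
    and unit: "x0 \<in> X" "g x0 = 1"
  defines "S \<equiv> f ` {x \<in> X. g x = 1}"
  shows "bdd_above S" and "Sup S \<le> C" and "0 \<le> Sup S"
    and "\<And>x. x \<in> X \<Longrightarrow> f x \<le> Sup S * g x"
proof -
  have le_C: "f x \<le> C" if "x \<in> X" "g x = 1" for x
    using f_le[OF that(1)] that(2) by simp
  show bdd: "bdd_above S" using le_C unfolding S_def by (intro bdd_aboveI[where M=C]) auto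
  show "Sup S \<le> C" using unit le_C unfolding S_def by (intro cSup_least) auto
  have upper: "f x \<le> Sup S" if "x \<in> X" "g x = 1" for x
    using that bdd unfolding S_def by (intro cSup_upper) auto
  show "0 \<le> Sup S" using upper[OF unit] nonneg(1)[of x0] by linarith
  fix x assume x: "x \<in> X"
  show "f x \<le> Sup S * g x"
  proof (cases "g x = 0")
    case True then show ?thesis using f_le[OF x] by simp
  next
    case False
    then have gx: "g x > 0" using nonneg(2)[of x] by linarith
    then have "f ((1 / g x) *\<^sub>R x) \<le> Sup S"
      using x by (intro upper cone) (simp_all add: g_hom)
    then show ?thesis using gx by (simp add: f_hom field_simps)
  qed
qed

context positive_operator
begin

text \<open>\<open>T\<^sub>b\<close> is well defined as soon as \<open>T\<close> preserves \<open>ker A\<^sup>1\<^sup>/\<^sup>2\<close>; it is then unitarily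
  equivalent to the compression \<open>P T P\<close>, because \<open>A\<^sup>1\<^sup>/\<^sup>2 x \<mapsto> P x\<close> is an isometry of
  \<open>\<^bold>R(A\<^sup>1\<^sup>/\<^sup>2)\<close> onto \<open>M\<close>.\<close>

lemma RA_opnorm_T_b:
  assumes T: "cblinear T" and ker: "\<And>z. R z = 0 \<Longrightarrow> R (T z) = 0" and A0: "A \<noteq> (\<lambda>x. 0)"
  shows "bdd_above (RA_opnorm_set A (T_b A T)) \<and> RA_opnorm A (T_b A T) = onorm (\<lambda>x. P (T (P x)))"
proof -
  define E where "E x = P (T (P x))" for x
  have E: "cblinear E"
    unfolding E_def[abs_def] by (rule cblinear_compression[OF T])
  have P_T: "P (T x) = E x" for x
    using ker[OF R_diff_P[of x]] unfolding E_def
    by (intro P_eq_if_R_eq) (simp add: cblinear_diff[OF T] cblinear_diff[OF cblinear_R])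
  have E_P: "E (P x) = E x" for x by (simp add: E_def P_idem)
  have T_b_R: "RA_norm A (T_b A T (R z)) = norm (E z)" for z
  proof -
    define x where "x = (SOME x. R x = R z)"
    have "R x = R z" unfolding x_def by (rule someI) (rule refl)
    then have "E x = E z" using E_P P_eq_if_R_eq by metis
    then show ?thesis by (simp add: T_b_def x_def[symmetric] RA_norm_R P_T)
  qed
  define S where "S = (\<lambda>z. norm (E z)) ` {z \<in> UNIV. norm (P z) = 1}"
  have set_eq: "RA_opnorm_set A (T_b A T) = S"
    unfolding RA_opnorm_set_def S_def by (force simp: T_b_R RA_norm_R)
  obtain z0 where z0: "norm (P z0) = 1" using ex_P_unit[OF A0] .
  have le: "norm (E z) \<le> onorm E * norm (P z)" for z
    using cblinear_onorm[OF E, of "P z"] by (simp add: E_P)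
  note Sup = Sup_unit_level_set[where X=UNIV and f="\<lambda>z. norm (E z)" and g="\<lambda>z. norm (P z)"
      and C="onorm E", OF _ _ _ _ _ _ _ z0, folded S_def]
  have Sup_facts: "bdd_above S" "Sup S \<le> onorm E" "0 \<le> Sup S" "\<And>x. norm (E x) \<le> Sup S * norm (P x)"
    using Sup by (auto simp: norm_cblinear_scaleR E cblinear_P le)
  have "norm (E x) \<le> Sup S * norm x" for x
    using Sup_facts(4)[of x] mult_left_mono[OF norm_P_le Sup_facts(3)] by (rule order_trans)
  then have "onorm E \<le> Sup S"
    using Sup_facts(3) by (intro onorm_bound) auto
  then show ?thesis
    using Sup_facts(1,2) by (simp add: set_eq RA_opnorm_def E_def[abs_def])
qed

text \<open>The bound \<open>\<parallel>E\<parallel> \<le> \<parallel>D\<parallel>\<^sub>A\<close> is obtained by testing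
  \<open>E u \<in> M\<close> against the dense set \<open>R(A\<^sup>1\<^sup>/\<^sup>2)\<close>.\<close>

lemma norm_R_le_of_A_adjoint:
  assumes E: "cblinear E" and adj: "\<And>x w. cinner (R (D x)) w = cinner (R x) (E w)"
  shows "norm (R (D x)) \<le> onorm E * norm (R x)"
proof -
  have "(norm (R (D x)))\<^sup>2 = cmod (cinner (R x) (E (R (D x))))"
    by (simp add: adj[symmetric] cmod_cinner_self)
  also have "\<dots> \<le> norm (R x) * (onorm E * norm (R (D x)))"
    by (rule order_trans[OF norm_cinner_le mult_left_mono[OF cblinear_onorm[OF E] norm_ge_zero]])
  finally show ?thesis
    using onorm_pos_le[OF cblinear_bounded_linear[OF E]]
    by (cases "R (D x) = 0") (auto simp: power2_eq_square mult.commute mult.left_commute)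
qed

lemma R_P_of_A_adjoint:
  assumes adj: "\<And>x w. cinner (R (D x)) w = cinner (R x) (E w)"
  shows "R (D (P x)) = R (D x)"
  by (rule cinner_ext_left) (simp add: adj R_P)

lemma A_opnorm_eq_onorm_A_adjoint:
  assumes D: "cblinear D" and E: "cblinear E" and E_M: "\<And>w. E w \<in> M"
    and adj: "\<And>x w. cinner (R (D x)) w = cinner (R x) (E w)" and A0: "A \<noteq> (\<lambda>x. 0)"
  shows "A_opnorm A D = onorm E"
proof -
  define S where "S = (\<lambda>x. norm (R (D x))) ` {x \<in> M. norm (R x) = 1}"
  have A_opnorm: "A_opnorm A D = Sup S"
    unfolding A_opnorm_def S_def by (simp add: A_norm_eq)
  obtain u0 where u0: "u0 \<in> M" "norm (R u0) = 1" using ex_R_unit[OF A0] .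
  note Sup = Sup_unit_level_set[where X=M and f="\<lambda>x. norm (R (D x))" and g="\<lambda>x. norm (R x)"
      and C="onorm E", OF _ _ _ _ _ _ u0, folded S_def]
  have Sup_facts: "Sup S \<le> onorm E" "0 \<le> Sup S" "\<And>x. x \<in> M \<Longrightarrow> norm (R (D x)) \<le> Sup S * norm (R x)"
    using Sup(2-4) norm_R_le_of_A_adjoint[OF E adj]
    by (auto simp: norm_cblinear_scaleR cblinear_scaleR[OF D] cblinear_R csubspace_scaleR[OF M.csubspace])
  have "norm (E u) \<le> Sup S * norm u" for u
  proof (rule norm_le_if_cinner_le_on_closure)
    show "E u \<in> closure (range R)" using E_M closure_range_R by simp
    show "0 \<le> Sup S * norm u" using Sup_facts(2) by simp
    fix v assume "v \<in> range R"
    then obtain x where v: "v = R x" by blast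
    have "cmod (cinner (R (D (P x))) u) \<le> norm (R (D (P x))) * norm u" by (rule norm_cinner_le)
    also have "\<dots> \<le> Sup S * norm (R (P x)) * norm u"
      by (intro mult_right_mono Sup_facts(3) P_in norm_ge_zero)
    finally show "cmod (cinner v (E u)) \<le> Sup S * norm u * norm v"
      by (simp add: v adj[symmetric] R_P_of_A_adjoint[OF adj] R_P algebra_simps)
  qed
  then have "onorm E \<le> Sup S"
    using Sup_facts(2) by (intro onorm_bound) auto
  with Sup_facts(1) A_opnorm show ?thesis by simp
qed

end

section \<open>The operators \<open>T\<^sup>\<diamond>\<close> and \<open>(T\<^sup>\<diamond>)\<^sup>\<diamond>\<close>\<close>

text \<open>By Baire's theorem one of the closed sets \<open>F n\<close> contains a ball.\<close>

lemma bounded_linear_of_closed_cover: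
  fixes f :: "'a::banach \<Rightarrow> 'b::real_normed_vector"
  assumes f: "linear f"
    and closed: "\<And>n. closed (F n)" and cover: "(\<Union>n. F n) = UNIV"
    and bound: "\<And>n x. x \<in> F n \<Longrightarrow> norm (f x) \<le> real n"
  shows "bounded_linear f"
proof -
  have "\<exists>n. interior (F n) \<noteq> {}"
  proof (rule ccontr)
    assume "\<nexists>n. interior (F n) \<noteq> {}"
    then have "euclidean interior_of \<Union>(range F) = {}"
      using completely_metrizable_space_euclidean closed
      by (intro Baire_category_alt) (auto simp: closed_closedin[symmetric])
    then show False using cover by simp
  qed
  then obtain n x0 r where r: "r > 0" "ball x0 r \<subseteq> F n"
    by (metis all_not_in_conv interior_subset open_contains_ball open_interior subset_trans)
  have small: "norm (f u) \<le> 2 * real n" if "norm u < r" for u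
  proof -
    have "x0 + u \<in> F n" "x0 \<in> F n" using r that by (auto simp: dist_norm subset_iff)
    then have "norm (f (x0 + u)) \<le> real n" "norm (f x0) \<le> real n" by (auto intro: bound)
    moreover have "f u = f (x0 + u) - f x0" by (simp add: linear_add[OF f])
    ultimately show ?thesis by (metis norm_triangle_ineq4 order_trans add_mono mult_2)
  qed
  have "norm (f x) \<le> norm x * (4 * real n / r)" for x
  proof (cases "x = 0")
    case False
    define u where "u = (r / (2 * norm x)) *\<^sub>R x"
    have "norm u < r" using False r by (simp add: u_def)
    then have "r / (2 * norm x) * norm (f x) \<le> 2 * real n"
      using small[of u] False r by (simp add: u_def linear_scale[OF f])
    then show ?thesis using False r by (simp add: field_simps)
  qed (simp add: linear_0[OF f])
  then show ?thesis
    by (intro bounded_linear_intro linear_add[OF f] linear_scale[OF f])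
qed

locale BA_half_operator = positive_operator +
  fixes T :: "'a \<Rightarrow> 'a"
  assumes BA_half: "T \<in> BA_half A"
begin

lemma cblinear_T: "cblinear T" using BA_half by (simp add: BA_half_def)

lemma cinner_T: "cinner (T x) y = cinner x (adjoint T y)" by (rule cinner_adjoint[OF cblinear_T])

lemma ex_adjoint_T_R: "\<exists>y. R y = adjoint T (R x)"
proof -
  have "adjoint T (R x) \<in> range R" using BA_half by (auto simp: BA_half_def)
  then show ?thesis by (metis rangeE)
qed

lemma R_T_eq_0: "R z = 0 \<Longrightarrow> R (T z) = 0"
proof (rule cinner_ext_left)
  fix w assume z: "R z = 0"
  obtain y where y: "R y = adjoint T (R w)" using ex_adjoint_T_R by blast
  have "cinner (R (T z)) w = cinner z (R y)" by (simp add: R_hermitian cinner_T y)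
  also have "\<dots> = 0" by (simp add: R_hermitian[symmetric] z)
  finally show "cinner (R (T z)) w = cinner 0 w" by simp
qed

definition T_diamond :: "'a \<Rightarrow> 'a" where
  "T_diamond x = P (SOME y. R y = adjoint T (R x))"

lemma R_T_diamond: "R (T_diamond x) = adjoint T (R x)"
  using someI_ex[OF ex_adjoint_T_R] by (simp add: T_diamond_def R_P)

lemma T_diamond_in_M: "T_diamond x \<in> M" by (simp add: T_diamond_def P_in)

lemma T_diamond_eqI: "m \<in> M \<Longrightarrow> R m = adjoint T (R x) \<Longrightarrow> T_diamond x = m"
  using R_inj_on_M[OF T_diamond_in_M] R_T_diamond by metis

lemma T_diamond_add: "T_diamond (x + y) = T_diamond x + T_diamond y"
  by (intro T_diamond_eqI csubspace_add[OF M.csubspace] T_diamond_in_M)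
    (simp add: cblinear_add[OF cblinear_R] cblinear_add[OF cblinear_adjoint[OF cblinear_T]] R_T_diamond)

lemma T_diamond_scaleC: "T_diamond (scaleC c x) = scaleC c (T_diamond x)"
  by (intro T_diamond_eqI csubspace_scaleC[OF M.csubspace] T_diamond_in_M)
    (simp add: cblinear_scaleC[OF cblinear_R] cblinear_scaleC[OF cblinear_adjoint[OF cblinear_T]] R_T_diamond)

lemma cinner_T_diamond_R: "cinner (T_diamond x) (R w) = cinner x (R (T w))"
proof -
  have "cinner (T_diamond x) (R w) = cinner (adjoint T (R x)) w"
    by (simp add: R_hermitian[of "T_diamond x" w, symmetric] R_T_diamond)
  also have "\<dots> = cnj (cinner (T w) (R x))"
    by (simp add: cinner_T cinner_cnj[of "adjoint T (R x)"])
  also have "\<dots> = cinner (R x) (T w)"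
    by (rule cinner_cnj[symmetric])
  also have "\<dots> = cinner x (R (T w))"
    by (rule R_hermitian)
  finally show ?thesis .
qed

text \<open>This is the closed graph part of Douglas' lemma; \<open>T\<^sup>\<diamond>\<close> is bounded on each of the closed
  sets \<open>F n\<close>, since they are defined by testing against the dense set \<open>R(A\<^sup>1\<^sup>/\<^sup>2)\<close>.\<close>

lemma cblinear_T_diamond: "cblinear T_diamond"
proof -
  define F where "F n = {x. \<forall>w. cmod (cinner x (R (T w))) \<le> real n * norm (R w)}" for n
  have "bounded_linear T_diamond"
  proof (rule bounded_linear_of_closed_cover)
    show "linear T_diamond"
      by (rule linearI) (simp_all add: T_diamond_add T_diamond_scaleC scaleR_scaleC)
    show "closed (F n)" for n
      unfolding F_def by (intro closed_Collect_all closed_Collect_le continuous_intros)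
    show "norm (T_diamond x) \<le> real n" if "x \<in> F n" for n x
    proof (rule norm_le_if_cinner_le_on_closure)
      show "T_diamond x \<in> closure (range R)" by (simp add: closure_range_R T_diamond_in_M)
      fix v assume "v \<in> range R"
      then obtain w where v: "v = R w" by blast
      have "cmod (cinner v (T_diamond x)) = cmod (cinner (T_diamond x) (R w))"
        by (subst cinner_cnj) (simp add: v)
      then show "cmod (cinner v (T_diamond x)) \<le> real n * norm v"
        using that by (simp add: F_def cinner_T_diamond_R v)
    qed simp
    have "x \<in> F (nat \<lceil>norm (T_diamond x)\<rceil>)" for x
    proof -
      have "cmod (cinner (T_diamond x) (R w)) \<le> real (nat \<lceil>norm (T_diamond x)\<rceil>) * norm (R w)" for w
        by (rule order_trans[OF norm_cinner_le mult_right_mono]) (simp_all add: real_nat_ceiling_ge)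
      then show ?thesis by (simp add: F_def cinner_T_diamond_R)
    qed
    then show "(\<Union>n. F n) = UNIV" by blast
  qed
  then show ?thesis by (simp add: cblinear_def T_diamond_scaleC)
qed

lemma diamond_T: "diamond A T = T_diamond"
  by (rule diamond_eqI[OF cblinear_T cblinear_T_diamond]) (simp_all add: R_T_diamond T_diamond_in_M)

lemma R_T_P: "R (T (P x)) = R (T x)"
  using R_T_eq_0[OF R_diff_P[of x]] by (simp add: cblinear_diff[OF cblinear_T] cblinear_diff[OF cblinear_R])

lemma P_T_P: "P (T (P x)) = P (T x)"
  by (rule P_eq_if_R_eq[OF R_T_P])

lemma diamond_T_diamond: "diamond A T_diamond = (\<lambda>x. P (T (P x)))"
proof (rule diamond_eqI[OF cblinear_T_diamond])
  show "cblinear (\<lambda>x. P (T (P x)))" by (rule cblinear_compression[OF cblinear_T])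
  show "adjoint T_diamond (R x) = R (P (T (P x)))" for x
  proof (rule cinner_ext_right)
    fix y
    show "cinner y (adjoint T_diamond (R x)) = cinner y (R (P (T (P x))))"
      using cinner_adjoint[OF cblinear_T_diamond, of y "R x"] cinner_T_diamond_R[of y x]
      by (simp add: R_P R_T_P)
  qed
qed (simp add: P_in)

lemma R_T_diamond_A_adjoint: "cinner (R (T_diamond x)) w = cinner (R x) (P (T (P w)))"
proof -
  have "cinner (R (T_diamond x)) w = cinner (P (R x)) (T w)"
    by (simp add: R_hermitian cinner_T_diamond_R P_id[OF R_in_M])
  also have "\<dots> = cinner (R x) (P (T (P w)))"
    by (simp add: P_self_adjoint P_T_P)
  finally show ?thesis .
qed

end

theorem mainTheorem5:
  fixes A T :: "'a::chilbert_space \<Rightarrow> 'a"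
  assumes "positive_op A"
    and "A \<noteq> (\<lambda>x. 0)"
    and "T \<in> BA_half A"
  shows "bdd_above (RA_opnorm_set A (T_b A T))
         \<and> RA_opnorm A (T_b A T) = onorm (diamond A (diamond A T))
         \<and> onorm (diamond A (diamond A T)) = A_opnorm A (diamond A T)"
proof -
  interpret BA_half_operator A T
    using assms by unfold_locales auto
  have "A_opnorm A T_diamond = onorm (\<lambda>x. P (T (P x)))"
    by (intro A_opnorm_eq_onorm_A_adjoint cblinear_T_diamond cblinear_compression cblinear_T
        R_T_diamond_A_adjoint P_in assms(2))
  then show ?thesis
    using RA_opnorm_T_b[OF cblinear_T R_T_eq_0 assms(2)] by (simp add: diamond_T diamond_T_diamond)
qed

end
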